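(* Every solvable subgroup of $PL_o(I)$ is countable.
   Context: $PL_o(I)$ is the group of orientation-preserving piecewise-linear homeomorphisms of $I=[0,1]$ with finitely many breaks in slope. *)

theory Defs
  imports "HOL-Analysis.Analysis" "HOL-Algebra.Solvable_Groups"
begin

definition PL_on_I :: "(real \<Rightarrow> real) \<Rightarrow> bool" where
  "PL_on_I f \<longleftrightarrow> (\<exists>xs::real list. length xs \<ge> 2 \<and> sorted_wrt (<) xs \<and>
      hd xs = 0 \<and> last xs = 1 \<and>
      (\<forall>i. Suc i < length xs \<longrightarrow>
         (\<exists>a b. \<forall>x\<in>{xs ! i .. xs ! Suc i}. f x = a * x + b)))"

text \<open>Elements of PL_o(I), represented as functions on the reals that are the identity
  outside [0,1] (so that composition is the group operation).\<close>
definition PLo :: "(real \<Rightarrow> real) set" where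
  "PLo = {f. (\<exists>g. homeomorphism {0..1} {0..1} f g) \<and> strict_mono_on {0..1} f \<and>
             PL_on_I f \<and> (\<forall>x. x \<notin> {0..1} \<longrightarrow> f x = x)}"

definition PLo_group :: "(real \<Rightarrow> real) monoid" where
  "PLo_group = \<lparr> carrier = PLo, monoid.mult = (\<lambda>f g. f \<circ> g), one = id \<rparr>"

end

(*
  A solvable group is reached from the trivial group along its derived series, so it suffices to
  show that a subgroup K of PL_o(I) whose commutators lie in a countable set is countable.

  An element of K is determined by its restrictions to its finitely many orbitals, so it suffices
  that only countably many orbitals occur and that, for every orbital (a, b) of an element of K, only
  countably many restrictions to [a, b] occur. The restriction of x is determined by the conjugate of
  a bump of K on (a, b) by x, by x(a), and by an element of the centralizer of that bump. Such a
  centralizer element is determined by its slope at a, and these slopes form a discrete, hence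
  countable, subgroup of the positive reals.
*)
theory Submission
  imports Defs
begin

section \<open>Elements of \<open>PL\<^sub>o(I)\<close>\<close>

lemma PLo_fixes_outside: "f \<in> PLo \<Longrightarrow> t \<notin> {0..1} \<Longrightarrow> f t = t"
  by (simp add: PLo_def)

lemma PLo_image: "f \<in> PLo \<Longrightarrow> f ` {0..1} = {0..1}"
  unfolding PLo_def homeomorphism_def by auto

lemma PLo_strict_mono:
  assumes "f \<in> PLo"
  shows "strict_mono f"
proof (rule strict_monoI)
  fix s t :: real
  assume "s < t"
  have mono01: "strict_mono_on {0..1} f" and into01: "\<And>u. u \<in> {0..1} \<Longrightarrow> f u \<in> {0..1}"
    using assms PLo_image[OF assms] by (auto simp: PLo_def)
  show "f s < f t"
  proof (cases "s \<in> {0..1}"; cases "t \<in> {0..1}")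
    assume "s \<in> {0..1}" "t \<in> {0..1}"
    then show ?thesis
      using mono01 \<open>s < t\<close> by (simp add: strict_mono_on_def)
  next
    assume "s \<in> {0..1}" "t \<notin> {0..1}"
    then show ?thesis
      using into01[of s] PLo_fixes_outside[OF assms] \<open>s < t\<close> by force
  next
    assume "s \<notin> {0..1}" "t \<in> {0..1}"
    then show ?thesis
      using into01[of t] PLo_fixes_outside[OF assms] \<open>s < t\<close> by force
  next
    assume "s \<notin> {0..1}" "t \<notin> {0..1}"
    then show ?thesis
      using PLo_fixes_outside[OF assms] \<open>s < t\<close> by simp
  qed
qed

lemma PLo_less_iff: "f \<in> PLo \<Longrightarrow> f s < f t \<longleftrightarrow> s < t"
  using PLo_strict_mono strict_mono_less by blast

lemma PLo_le_iff: "f \<in> PLo \<Longrightarrow> f s \<le> f t \<longleftrightarrow> s \<le> t"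
  using PLo_strict_mono strict_mono_less_eq by blast

lemma PLo_eq_iff: "f \<in> PLo \<Longrightarrow> f s = f t \<longleftrightarrow> s = t"
  using PLo_strict_mono strict_mono_eq by blast

lemma PLo_fixes_0:
  assumes "f \<in> PLo"
  shows "f 0 = 0"
proof -
  obtain s where "s \<in> {0..1}" "f s = 0"
    using PLo_image[OF assms] by (metis atLeastAtMost_iff image_iff order_refl zero_le_one)
  moreover have "f 0 \<in> {0..1}"
    using PLo_image[OF assms] by auto
  ultimately show ?thesis
    using PLo_le_iff[OF assms, of 0 s] by auto
qed

lemma PLo_fixes_1:
  assumes "f \<in> PLo"
  shows "f 1 = 1"
proof -
  obtain s where "s \<in> {0..1}" "f s = 1"
    using PLo_image[OF assms] by (metis atLeastAtMost_iff image_iff order_refl zero_le_one)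
  moreover have "f 1 \<in> {0..1}"
    using PLo_image[OF assms] by auto
  ultimately show ?thesis
    using PLo_le_iff[OF assms, of s 1] by auto
qed

lemma PLo_continuous:
  assumes "f \<in> PLo"
  shows "continuous_on UNIV f"
proof -
  have id_outside: "f x = x" if "x \<le> 0 \<or> 1 \<le> x" for x
    using that PLo_fixes_outside[OF assms, of x] PLo_fixes_0[OF assms] PLo_fixes_1[OF assms]
    by (cases "x = 0 \<or> x = 1") auto
  have "continuous_on {0..1} f"
    using assms by (auto simp: PLo_def homeomorphism_def)
  moreover have "continuous_on {..0} f" "continuous_on {1..} f"
    using id_outside by (auto intro: continuous_on_eq[OF continuous_on_id])
  ultimately have "continuous_on ({..0} \<union> {0..1} \<union> {1..}) f"
    by (intro continuous_on_closed_Un) auto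
  moreover have "{..0} \<union> {0..1} \<union> {1..} = (UNIV :: real set)"
    by auto
  ultimately show ?thesis
    by simp
qed

lemma PLo_isCont: "f \<in> PLo \<Longrightarrow> isCont f x"
  using PLo_continuous continuous_on_eq_continuous_at[OF open_UNIV] by blast

lemma PLo_bij:
  assumes "f \<in> PLo"
  shows "bij f"
proof (rule bijI)
  show "inj f"
    using PLo_strict_mono[OF assms] by (rule strict_mono_imp_inj_on)
  have "y \<in> range f" for y
  proof (cases "y \<in> {0..1}")
    case True
    then show ?thesis
      using PLo_image[OF assms] by blast
  next
    case False
    then have "y = f y"
      using PLo_fixes_outside[OF assms] by simp
    then show ?thesis
      by (rule range_eqI)
  qed
  then show "surj f"
    by blast
qed

lemma PLo_the_inv_apply: "f \<in> PLo \<Longrightarrow> the_inv f (f x) = x"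
  by (rule the_inv_f_f[OF bij_is_inj[OF PLo_bij]])

lemma PLo_apply_the_inv:
  assumes "f \<in> PLo"
  shows "f (the_inv f y) = y"
  using f_the_inv_into_f[OF bij_is_inj[OF PLo_bij[OF assms]], of y] bij_is_surj[OF PLo_bij[OF assms]]
  by simp

lemma PLo_the_inv_fixes: "f \<in> PLo \<Longrightarrow> f x = x \<Longrightarrow> the_inv f x = x"
  by (metis PLo_the_inv_apply)

lemma list_straddle_le_less:
  fixes xs :: "'a::linorder list"
  assumes "xs \<noteq> []" "xs ! 0 \<le> p" "p < last xs"
  obtains i where "Suc i < length xs" "xs ! i \<le> p" "p < xs ! Suc i"
proof -
  define i where "i = Max {j. j < length xs \<and> xs ! j \<le> p}"
  have i: "i < length xs" "xs ! i \<le> p"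
    using Max_in[of "{j. j < length xs \<and> xs ! j \<le> p}"] assms unfolding i_def[symmetric] by auto
  moreover have "i \<noteq> length xs - 1"
    using i assms by (auto simp: last_conv_nth)
  then have "Suc i < length xs"
    using i by linarith
  moreover have "p < xs ! Suc i"
    using Max_ge[of "{j. j < length xs \<and> xs ! j \<le> p}" "Suc i"] \<open>Suc i < length xs\<close>
    unfolding i_def[symmetric] by force
  ultimately show ?thesis
    using that by blast
qed

lemma list_straddle_less_le:
  fixes xs :: "'a::linorder list"
  assumes "xs \<noteq> []" "xs ! 0 < p" "p \<le> last xs"
  obtains i where "Suc i < length xs" "xs ! i < p" "p \<le> xs ! Suc i"
proof -
  define J where "J = {j. j < length xs \<and> p \<le> xs ! j}"
  have "length xs - 1 \<in> J"
    using assms by (simp add: J_def last_conv_nth)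
  then have k: "Min J \<in> J"
    by (intro Min_in) (auto simp: J_def)
  then obtain i where i: "Min J = Suc i"
    using assms(2) by (cases "Min J") (auto simp: J_def)
  have "finite J"
    by (simp add: J_def)
  then have "i \<notin> J"
    using Min_le[of J i] i by fastforce
  then show ?thesis
    using that k i by (auto simp: J_def not_le)
qed

lemma PLo_piecewise_affine:
  assumes "f \<in> PLo"
  obtains xs A B where "length xs \<ge> 2" "sorted_wrt (<) xs" "xs ! 0 = 0" "last xs = 1"
    "\<And>i x. Suc i < length xs \<Longrightarrow> x \<in> {xs ! i .. xs ! Suc i} \<Longrightarrow> f x = A i * x + B i"
proof -
  have "PL_on_I f"
    using assms by (simp add: PLo_def)
  then obtain xs where xs: "length xs \<ge> 2" "sorted_wrt (<) xs" "hd xs = 0" "last xs = 1"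
    "\<forall>i. Suc i < length xs \<longrightarrow> (\<exists>a b. \<forall>x\<in>{xs ! i .. xs ! Suc i}. f x = a * x + b)"
    unfolding PL_on_I_def by blast
  have "\<forall>i. \<exists>a b. Suc i < length xs \<longrightarrow> (\<forall>x\<in>{xs ! i .. xs ! Suc i}. f x = a * x + b)"
    using xs(5) by blast
  then obtain A B where AB: "\<forall>i. Suc i < length xs \<longrightarrow> (\<forall>x\<in>{xs ! i .. xs ! Suc i}. f x = A i * x + B i)"
    by metis
  have "xs ! 0 = 0"
    using xs(1,3) by (cases xs) auto
  show ?thesis
    by (rule that[OF xs(1,2) \<open>xs ! 0 = 0\<close> xs(4)]) (use AB in blast)
qed

lemma PLo_affine_right:
  assumes "f \<in> PLo" "0 \<le> p" "p < 1"
  obtains \<eta> \<kappa> where "\<eta> > 0" "\<kappa> > 0" "\<And>t. t \<in> {p..p+\<eta>} \<Longrightarrow> f t = f p + \<kappa> * (t - p)"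
proof -
  obtain xs A B where xs: "length xs \<ge> 2" "xs ! 0 = 0" "last xs = 1"
    and aff: "\<And>i x. Suc i < length xs \<Longrightarrow> x \<in> {xs ! i .. xs ! Suc i} \<Longrightarrow> f x = A i * x + B i"
    using PLo_piecewise_affine[OF assms(1)] by metis
  have "xs \<noteq> []"
    using xs(1) by auto
  then obtain i where i: "Suc i < length xs" "xs ! i \<le> p" "p < xs ! Suc i"
    using list_straddle_le_less[of xs p] xs(2,3) assms(2,3) by auto
  define \<eta> where "\<eta> = xs ! Suc i - p"
  have "\<eta> > 0"
    using i by (simp add: \<eta>_def)
  have \<eta>: "f t = f p + A i * (t - p)" if "t \<in> {p..p+\<eta>}" for t
  proof -
    have "f t = A i * t + B i" "f p = A i * p + B i"
      using that i by (auto simp: \<eta>_def intro!: aff[OF i(1)])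
    then show ?thesis
      by (simp add: algebra_simps)
  qed
  have "f p < f (p + \<eta>)"
    using PLo_less_iff[OF assms(1)] \<open>\<eta> > 0\<close> by simp
  then have "A i > 0"
    using \<eta>[of "p + \<eta>"] \<open>\<eta> > 0\<close> by (simp add: zero_less_mult_iff)
  then show ?thesis
    using that \<eta> \<open>\<eta> > 0\<close> by blast
qed

lemma PLo_affine_left:
  assumes "f \<in> PLo" "0 < p" "p \<le> 1"
  obtains \<eta> \<kappa> where "\<eta> > 0" "\<kappa> > 0" "\<And>t. t \<in> {p-\<eta>..p} \<Longrightarrow> f t = f p - \<kappa> * (p - t)"
proof -
  obtain xs A B where xs: "length xs \<ge> 2" "xs ! 0 = 0" "last xs = 1"
    and aff: "\<And>i x. Suc i < length xs \<Longrightarrow> x \<in> {xs ! i .. xs ! Suc i} \<Longrightarrow> f x = A i * x + B i"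
    using PLo_piecewise_affine[OF assms(1)] by metis
  have "xs \<noteq> []"
    using xs(1) by auto
  then obtain i where i: "Suc i < length xs" "xs ! i < p" "p \<le> xs ! Suc i"
    using list_straddle_less_le[of xs p] xs(2,3) assms(2,3) by auto
  define \<eta> where "\<eta> = p - xs ! i"
  have "\<eta> > 0"
    using i by (simp add: \<eta>_def)
  have \<eta>: "f t = f p - A i * (p - t)" if "t \<in> {p-\<eta>..p}" for t
  proof -
    have "f t = A i * t + B i" "f p = A i * p + B i"
      using that i by (auto simp: \<eta>_def intro!: aff[OF i(1)])
    then show ?thesis
      by (simp add: algebra_simps)
  qed
  have "f (p - \<eta>) < f p"
    using PLo_less_iff[OF assms(1)] \<open>\<eta> > 0\<close> by simp
  then have "A i > 0"
    using \<eta>[of "p - \<eta>"] \<open>\<eta> > 0\<close> by (simp add: zero_less_mult_iff)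
  then show ?thesis
    using that \<eta> \<open>\<eta> > 0\<close> by blast
qed

lemma PL_on_I_the_inv:
  assumes "f \<in> PLo"
  shows "PL_on_I (the_inv f)"
proof -
  obtain xs A B where xs: "length xs \<ge> 2" "sorted_wrt (<) xs" "xs ! 0 = 0" "last xs = 1"
    and aff: "\<And>i x. Suc i < length xs \<Longrightarrow> x \<in> {xs ! i .. xs ! Suc i} \<Longrightarrow> f x = A i * x + B i"
    using PLo_piecewise_affine[OF assms] by metis
  have inv_aff: "the_inv f y = (1 / A i) * y + (- B i / A i)"
    if i: "Suc i < length xs" and y: "y \<in> {f (xs ! i) .. f (xs ! Suc i)}" for i y
  proof -
    have "xs ! i < xs ! Suc i"
      using xs(2) i by (simp add: sorted_wrt_iff_nth_less)
    then have "f (xs ! i) \<noteq> f (xs ! Suc i)"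
      using PLo_eq_iff[OF assms] by simp
    then have "A i \<noteq> 0"
      using aff[OF i, of "xs ! i"] aff[OF i, of "xs ! Suc i"] \<open>xs ! i < xs ! Suc i\<close> by auto
    have "the_inv f y \<in> {xs ! i .. xs ! Suc i}"
      using y PLo_le_iff[OF assms] PLo_apply_the_inv[OF assms] by (metis atLeastAtMost_iff)
    then have "y = A i * the_inv f y + B i"
      using aff[OF i] PLo_apply_the_inv[OF assms] by metis
    with \<open>A i \<noteq> 0\<close> show ?thesis
      by (simp add: field_simps)
  qed
  have "xs \<noteq> []"
    using xs(1) by auto
  show ?thesis
    unfolding PL_on_I_def
  proof (intro exI[of _ "map f xs"] conjI allI impI)
    show "2 \<le> length (map f xs)" "sorted_wrt (<) (map f xs)"
      using xs(1,2) by (simp_all add: sorted_wrt_map PLo_less_iff[OF assms])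
    show "hd (map f xs) = 0" "last (map f xs) = 1"
      using \<open>xs \<noteq> []\<close> xs(3,4) PLo_fixes_0[OF assms] PLo_fixes_1[OF assms]
      by (simp_all add: hd_map hd_conv_nth last_map)
    fix i
    assume "Suc i < length (map f xs)"
    then show "\<exists>a b. \<forall>y\<in>{map f xs ! i .. map f xs ! Suc i}. the_inv f y = a * y + b"
      using inv_aff[of i] by (intro exI[of _ "1 / A i"] exI[of _ "- B i / A i"]) simp
  qed
qed

lemma PLo_the_inv:
  assumes "f \<in> PLo"
  shows "the_inv f \<in> PLo"
proof -
  obtain g where g: "homeomorphism {0..1} {0..1} f g"
    using assms by (auto simp: PLo_def)
  have "the_inv f y = g y" if "y \<in> {0..1}" for y
    using g that PLo_the_inv_apply[OF assms] unfolding homeomorphism_def by metis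
  then have "homeomorphism {0..1} {0..1} (the_inv f) f"
    by (intro homeomorphism_cong[OF homeomorphism_symD[OF g]]) auto
  moreover have "strict_mono_on {0..1} (the_inv f)"
    using PLo_less_iff[OF assms] PLo_apply_the_inv[OF assms] by (metis strict_mono_onI)
  moreover have "the_inv f x = x" if "x \<notin> {0..1}" for x
    using PLo_fixes_outside[OF assms that] PLo_the_inv_fixes[OF assms] by blast
  ultimately show ?thesis
    using PL_on_I_the_inv[OF assms] by (auto simp: PLo_def)
qed

lemma PLo_comp_the_inv: "f \<in> PLo \<Longrightarrow> f \<circ> the_inv f = id"
  by (auto simp: PLo_apply_the_inv)

lemma PLo_the_inv_comp: "f \<in> PLo \<Longrightarrow> the_inv f \<circ> f = id"
  by (auto simp: PLo_the_inv_apply)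

section \<open>Subgroups of \<open>PL\<^sub>o(I)\<close>\<close>

lemma PLo_group_inv:
  assumes "f \<in> PLo"
  shows "inv\<^bsub>PLo_group\<^esub> f = the_inv f"
  unfolding m_inv_def PLo_group_def
proof (simp, rule the_equality)
  show "the_inv f \<in> PLo \<and> f \<circ> the_inv f = id \<and> the_inv f \<circ> f = id"
    using assms PLo_the_inv PLo_comp_the_inv PLo_the_inv_comp by blast
  show "g = the_inv f" if "g \<in> PLo \<and> f \<circ> g = id \<and> g \<circ> f = id" for g
    using that PLo_apply_the_inv[OF assms] by (metis comp_apply id_apply ext)
qed

lemma PLo_subgroupD:
  assumes "subgroup K PLo_group"
  shows "K \<subseteq> PLo" "id \<in> K" "\<And>f g. f \<in> K \<Longrightarrow> g \<in> K \<Longrightarrow> f \<circ> g \<in> K"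
    and "\<And>f. f \<in> K \<Longrightarrow> the_inv f \<in> K"
proof -
  interpret subgroup K PLo_group
    by fact
  show "K \<subseteq> PLo" "id \<in> K" "\<And>f g. f \<in> K \<Longrightarrow> g \<in> K \<Longrightarrow> f \<circ> g \<in> K"
    using subset one_closed m_closed by (auto simp: PLo_group_def)
  show "the_inv f \<in> K" if "f \<in> K" for f
  proof -
    have "f \<in> PLo"
      using \<open>K \<subseteq> PLo\<close> that by blast
    then show ?thesis
      using m_inv_closed[OF that] PLo_group_inv by simp
  qed
qed

lemma group_PLo_subgroup:
  assumes "subgroup H PLo_group"
  shows "group (PLo_group\<lparr>carrier := H\<rparr>)"
proof (rule groupI)
  show "\<exists>g\<in>carrier (PLo_group\<lparr>carrier := H\<rparr>). g \<otimes>\<^bsub>PLo_group\<lparr>carrier := H\<rparr>\<^esub> f = \<one>\<^bsub>PLo_group\<lparr>carrier := H\<rparr>\<^esub>"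
    if "f \<in> carrier (PLo_group\<lparr>carrier := H\<rparr>)" for f
    using that PLo_subgroupD[OF assms] PLo_the_inv_comp
    by (intro bexI[of _ "the_inv f"]) (auto simp: PLo_group_def)
qed (use PLo_subgroupD[OF assms] in \<open>auto simp: PLo_group_def comp_assoc\<close>)

lemma PLo_subgroup_inv:
  assumes "subgroup H PLo_group" "f \<in> H"
  shows "inv\<^bsub>PLo_group\<lparr>carrier := H\<rparr>\<^esub> f = the_inv f"
  using PLo_subgroupD[OF assms(1)] assms(2) PLo_the_inv_comp
  by (intro group.inv_equality[OF group_PLo_subgroup[OF assms(1)]]) (auto simp: PLo_group_def)

lemma subgroup_of_PLo_subgroup:
  assumes "subgroup H PLo_group" "subgroup K (PLo_group\<lparr>carrier := H\<rparr>)"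
  shows "subgroup K PLo_group"
proof -
  interpret K: subgroup K "PLo_group\<lparr>carrier := H\<rparr>"
    by fact
  have "K \<subseteq> H"
    using K.subset by simp
  show ?thesis
  proof
    show "K \<subseteq> carrier PLo_group"
      using \<open>K \<subseteq> H\<close> PLo_subgroupD(1)[OF assms(1)] by (simp add: PLo_group_def)
    show "f \<otimes>\<^bsub>PLo_group\<^esub> g \<in> K" if "f \<in> K" "g \<in> K" for f g
      using K.m_closed[OF that] by (simp add: PLo_group_def)
    show "\<one>\<^bsub>PLo_group\<^esub> \<in> K"
      using K.one_closed by (simp add: PLo_group_def)
    show "inv\<^bsub>PLo_group\<^esub> f \<in> K" if "f \<in> K" for f
    proof -
      have "f \<in> H" "f \<in> PLo"
        using that \<open>K \<subseteq> H\<close> PLo_subgroupD(1)[OF assms(1)] by auto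
      then show ?thesis
        using K.m_inv_closed[OF that] PLo_subgroup_inv[OF assms(1)] PLo_group_inv by simp
    qed
  qed
qed

lemma PLo_subgroup_funpow:
  assumes "subgroup K PLo_group" "g \<in> K"
  shows "g ^^ n \<in> K"
  using PLo_subgroupD[OF assms(1)] assms(2)
  by (induction n) (simp_all del: funpow.simps add: funpow_simps_right)

section \<open>Gaps and orbitals\<close>

definition left_gap_ends :: "real set \<Rightarrow> real set" where
  "left_gap_ends Z = {p \<in> Z. \<exists>q>p. {p<..<q} \<inter> Z = {}}"

definition right_gap_ends :: "real set \<Rightarrow> real set" where
  "right_gap_ends Z = {q \<in> Z. \<exists>p<q. {p<..<q} \<inter> Z = {}}"

lemma countable_left_gap_ends: "countable (left_gap_ends Z)"
proof -
  have "\<exists>r\<in>\<rat>. p < r \<and> {p<..r} \<inter> Z = {}" if p: "p \<in> left_gap_ends Z" for p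
  proof -
    obtain q where "p < q" "{p<..<q} \<inter> Z = {}"
      using p unfolding left_gap_ends_def by blast
    moreover obtain r where "r \<in> \<rat>" "p < r" "r < q"
      using Rats_dense_in_real[OF \<open>p < q\<close>] by blast
    moreover have "{p<..r} \<subseteq> {p<..<q}"
      using \<open>r < q\<close> by auto
    ultimately show ?thesis
      by blast
  qed
  then obtain r where r: "\<And>p. p \<in> left_gap_ends Z \<Longrightarrow> r p \<in> \<rat> \<and> p < r p \<and> {p<..r p} \<inter> Z = {}"
    by metis
  have "inj_on r (left_gap_ends Z)"
  proof (rule linorder_inj_onI')
    fix p p'
    assume p: "p \<in> left_gap_ends Z" "p' \<in> left_gap_ends Z" "p < p'"
    show "r p \<noteq> r p'"
    proof
      assume "r p = r p'"
      then have "p' \<in> {p<..r p}"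
        using r[OF p(2)] p(3) by auto
      then show False
        using r[OF p(1)] p(2) by (auto simp: left_gap_ends_def)
    qed
  qed
  moreover have "r ` left_gap_ends Z \<subseteq> \<rat>"
    using r by blast
  ultimately show ?thesis
    by (meson countable_image_inj_on countable_rat countable_subset)
qed

lemma countable_right_gap_ends: "countable (right_gap_ends Z)"
proof -
  have "\<exists>r\<in>\<rat>. r < q \<and> {r..<q} \<inter> Z = {}" if q: "q \<in> right_gap_ends Z" for q
  proof -
    obtain p where "p < q" "{p<..<q} \<inter> Z = {}"
      using q unfolding right_gap_ends_def by blast
    moreover obtain r where "r \<in> \<rat>" "p < r" "r < q"
      using Rats_dense_in_real[OF \<open>p < q\<close>] by blast
    moreover have "{r..<q} \<subseteq> {p<..<q}"
      using \<open>p < r\<close> by auto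
    ultimately show ?thesis
      by blast
  qed
  then obtain r where r: "\<And>q. q \<in> right_gap_ends Z \<Longrightarrow> r q \<in> \<rat> \<and> r q < q \<and> {r q..<q} \<inter> Z = {}"
    by metis
  have "inj_on r (right_gap_ends Z)"
  proof (rule linorder_inj_onI')
    fix q q'
    assume q: "q \<in> right_gap_ends Z" "q' \<in> right_gap_ends Z" "q < q'"
    show "r q \<noteq> r q'"
    proof
      assume "r q = r q'"
      then have "q \<in> {r q'..<q'}"
        using r[OF q(1)] q(3) by auto
      then show False
        using r[OF q(2)] q(1) by (auto simp: right_gap_ends_def)
    qed
  qed
  moreover have "r ` right_gap_ends Z \<subseteq> \<rat>"
    using r by blast
  ultimately show ?thesis
    by (meson countable_image_inj_on countable_rat countable_subset)
qed

lemma countable_image_through: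
  assumes "countable (h ` A)" "\<And>x y. x \<in> A \<Longrightarrow> y \<in> A \<Longrightarrow> h x = h y \<Longrightarrow> f x = f y"
  shows "countable (f ` A)"
proof -
  have "f x \<in> (f \<circ> inv_into A h) ` (h ` A)" if "x \<in> A" for x
  proof -
    have "inv_into A h (h x) \<in> A" "h (inv_into A h (h x)) = h x"
      using that by (simp_all add: inv_into_into f_inv_into_f)
    then have "f x = (f \<circ> inv_into A h) (h x)"
      using assms(2)[OF _ that, of "inv_into A h (h x)"] by simp
    then show ?thesis
      using that by blast
  qed
  then have "f ` A \<subseteq> (f \<circ> inv_into A h) ` (h ` A)"
    by blast
  then show ?thesis
    by (rule countable_subset[OF _ countable_image[OF assms(1)]])
qed

definition orbitals :: "(real \<Rightarrow> real) \<Rightarrow> (real \<times> real) set" where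
  "orbitals f = {(p, q). p < q \<and> f p = p \<and> f q = q \<and> (\<forall>t\<in>{p<..<q}. f t \<noteq> t)}"

lemma orbital_left_gap_end: "(p, q) \<in> orbitals f \<Longrightarrow> p \<in> left_gap_ends {t. f t = t}"
  by (auto simp: orbitals_def left_gap_ends_def)

lemma orbitals_same_left_end:
  assumes "(p, q) \<in> orbitals f" "(p, q') \<in> orbitals f"
  shows "q = q'"
proof (rule ccontr)
  assume "q \<noteq> q'"
  then consider "q < q'" | "q' < q"
    by linarith
  then show False
    using assms by cases (auto simp: orbitals_def)
qed

lemma PLo_orbital_subset_unit:
  assumes "f \<in> PLo" "(p, q) \<in> orbitals f"
  shows "0 \<le> p" "q \<le> 1"
proof -
  have "t \<in> {0..1}" if "t \<in> {p<..<q}" for t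
  proof (rule ccontr)
    assume "t \<notin> {0..1}"
    then have "f t = t"
      by (rule PLo_fixes_outside[OF assms(1)])
    with that assms(2) show False
      by (auto simp: orbitals_def)
  qed
  then have "{p<..<q} \<subseteq> {0..1}"
    by blast
  then show "0 \<le> p" "q \<le> 1"
    using assms(2) by (auto simp: orbitals_def greaterThanLessThan_subseteq_atLeastAtMost_iff)
qed

lemma PLo_orbitals_cover:
  assumes "f \<in> PLo" "f t \<noteq> t"
  obtains p q where "(p, q) \<in> orbitals f" "p < t" "t < q"
proof -
  have "t \<in> {0..1}"
    using assms PLo_fixes_outside by blast
  have "closed {x. f x = x}"
    using PLo_continuous[OF assms(1)] continuous_on_id by (rule closed_Collect_eq)
  then have cpt: "compact ({0..t} \<inter> {x. f x = x})" "compact ({t..1} \<inter> {x. f x = x})"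
    by (simp_all add: compact_Int_closed)
  have ne: "0 \<in> {0..t} \<inter> {x. f x = x}" "1 \<in> {t..1} \<inter> {x. f x = x}"
    using \<open>t \<in> {0..1}\<close> PLo_fixes_0[OF assms(1)] PLo_fixes_1[OF assms(1)] by auto
  obtain p where p: "p \<in> {0..t} \<inter> {x. f x = x}" "\<forall>s\<in>{0..t} \<inter> {x. f x = x}. s \<le> p"
    using compact_attains_sup[OF cpt(1)] ne(1) by blast
  obtain q where q: "q \<in> {t..1} \<inter> {x. f x = x}" "\<forall>s\<in>{t..1} \<inter> {x. f x = x}. q \<le> s"
    using compact_attains_inf[OF cpt(2)] ne(2) by blast
  have "p \<noteq> t" "q \<noteq> t"
    using p(1) q(1) assms(2) by auto
  then have "p < t" "t < q"
    using p(1) q(1) by auto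
  moreover have "f s \<noteq> s" if "s \<in> {p<..<q}" for s
  proof
    assume "f s = s"
    show False
    proof (cases "s \<le> t")
      case True
      then have "s \<le> p"
        using p \<open>f s = s\<close> that by auto
      then show False
        using that by simp
    next
      case False
      then have "q \<le> s"
        using q \<open>f s = s\<close> that by auto
      then show False
        using that by simp
    qed
  qed
  ultimately have "(p, q) \<in> orbitals f"
    using p(1) q(1) by (auto simp: orbitals_def)
  then show ?thesis
    using that \<open>p < t\<close> \<open>t < q\<close> by blast
qed

lemma PLo_orbital_direction:
  assumes "f \<in> PLo" "(a, b) \<in> orbitals f"
  shows "(\<forall>t\<in>{a<..<b}. t < f t) \<or> (\<forall>t\<in>{a<..<b}. f t < t)"
proof (rule ccontr)
  assume "\<not> ?thesis"
  then obtain s u where "s \<in> {a<..<b}" "u \<in> {a<..<b}" "\<not> s < f s" "\<not> f u < u"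
    by blast
  moreover have "f s \<noteq> s" "f u \<noteq> u"
    using assms(2) calculation(1,2) by (auto simp: orbitals_def)
  ultimately have su: "s \<in> {a<..<b}" "u \<in> {a<..<b}" "f s - s < 0" "0 < f u - u"
    by auto
  have "continuous_on {a<..<b} (\<lambda>t. f t - t)"
    by (intro continuous_intros continuous_on_subset[OF PLo_continuous[OF assms(1)]]) simp
  then have "connected ((\<lambda>t. f t - t) ` {a<..<b})"
    by (rule connected_continuous_image) simp
  then have "0 \<in> (\<lambda>t. f t - t) ` {a<..<b}"
    by (rule connectedD_interval[OF _ imageI[OF su(1)] imageI[OF su(2)]]) (use su in auto)
  then show False
    using assms(2) by (auto simp: orbitals_def)
qed

lemma finite_affine_fixed_points:
  fixes a b :: real
  assumes "(a, b) \<noteq> (1, 0)"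
  shows "finite {x. a * x + b = x}"
proof (cases "a = 1")
  case False
  then have "{x. a * x + b = x} \<subseteq> {b / (1 - a)}"
    by (auto simp: field_simps)
  then show ?thesis
    using finite_subset by blast
qed (use assms in auto)

lemma finite_PLo_orbitals:
  assumes "f \<in> PLo"
  shows "finite (orbitals f)"
proof -
  obtain xs A B where xs: "length xs \<ge> 2" "xs ! 0 = 0" "last xs = 1"
    and aff: "\<And>i x. Suc i < length xs \<Longrightarrow> x \<in> {xs ! i .. xs ! Suc i} \<Longrightarrow> f x = A i * x + B i"
    using PLo_piecewise_affine[OF assms] by metis
  define N where "N = {i. Suc i < length xs \<and> (A i, B i) \<noteq> (1, 0)}"
  define S where "S = set xs \<union> (\<Union>i\<in>N. {x. A i * x + B i = x})"
  have left_end: "p \<in> S" if pq: "(p, q) \<in> orbitals f" for p q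
  proof (cases "p \<in> set xs")
    case False
    have "xs \<noteq> []" "0 \<le> p" "p < 1"
      using xs(1) PLo_orbital_subset_unit[OF assms pq] pq by (auto simp: orbitals_def)
    then obtain i where i: "Suc i < length xs" "xs ! i \<le> p" "p < xs ! Suc i"
      using list_straddle_le_less[of xs p] xs(2,3) by auto
    have "xs ! i \<noteq> p"
      using False i(1) by (metis Suc_lessD nth_mem)
    define t where "t = (p + min q (xs ! Suc i)) / 2"
    have t: "t \<in> {p<..<q}" "t \<in> {xs ! i .. xs ! Suc i}"
      using pq i unfolding t_def orbitals_def by auto
    have "f t \<noteq> t"
      using pq t(1) by (auto simp: orbitals_def)
    then have "(A i, B i) \<noteq> (1, 0)"
      using aff[OF i(1) t(2)] by auto
    moreover have "A i * p + B i = p"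
      using aff[OF i(1), of p] i pq by (auto simp: orbitals_def)
    ultimately show ?thesis
      unfolding S_def N_def using i(1) by blast
  qed (simp add: S_def)
  then have "fst ` orbitals f \<subseteq> S"
    by auto
  moreover have "finite N"
    by (rule finite_subset[of _ "{..<length xs}"]) (auto simp: N_def)
  moreover have "finite {x. A i * x + B i = x}" if "i \<in> N" for i
    using that finite_affine_fixed_points by (simp add: N_def)
  ultimately have "finite (fst ` orbitals f)"
    unfolding S_def by (meson finite_UN_I finite_Un finite_set finite_subset)
  moreover have "inj_on fst (orbitals f)"
    using orbitals_same_left_end by (fastforce intro!: inj_onI)
  ultimately show ?thesis
    using finite_imageD by blast
qed

lemma PLo_orbital_conj:
  assumes "x \<in> PLo" "(a, b) \<in> orbitals g"
  shows "(x a, x b) \<in> orbitals (x \<circ> g \<circ> the_inv x)"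
proof -
  have "(x \<circ> g \<circ> the_inv x) t \<noteq> t" if "t \<in> {x a<..<x b}" for t
  proof -
    have "the_inv x t \<in> {a<..<b}"
      using that PLo_less_iff[OF assms(1)] PLo_apply_the_inv[OF assms(1)] by (metis greaterThanLessThan_iff)
    then have "g (the_inv x t) \<noteq> the_inv x t"
      using assms(2) by (auto simp: orbitals_def)
    then show ?thesis
      using PLo_eq_iff[OF assms(1)] PLo_apply_the_inv[OF assms(1)] by (metis comp_apply)
  qed
  moreover have "a < b" "g a = a" "g b = b"
    using assms(2) by (auto simp: orbitals_def)
  then have "x a < x b" "(x \<circ> g \<circ> the_inv x) (x a) = x a" "(x \<circ> g \<circ> the_inv x) (x b) = x b"
    by (simp_all add: PLo_less_iff[OF assms(1)] PLo_the_inv_apply[OF assms(1)])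
  ultimately show ?thesis
    by (simp add: orbitals_def)
qed

section \<open>Slopes and iterated affine maps\<close>

definition right_slope :: "(real \<Rightarrow> real) \<Rightarrow> real \<Rightarrow> real" where
  "right_slope f a = (SOME s. \<exists>\<delta>>0. \<forall>t\<in>{a..a+\<delta>}. f t = f a + s * (t - a))"

lemma right_slope_eqI:
  assumes "\<delta> > 0" "\<And>t. t \<in> {a..a+\<delta>} \<Longrightarrow> f t = f a + s * (t - a)"
  shows "right_slope f a = s"
proof -
  let ?P = "\<lambda>s. \<exists>\<delta>>0. \<forall>t\<in>{a..a+\<delta>}. f t = f a + s * (t - a)"
  have "?P s"
    using assms by blast
  then have "?P (right_slope f a)"
    unfolding right_slope_def by (rule someI)
  then obtain \<delta>' where "\<delta>' > 0" and \<delta>': "\<forall>t\<in>{a..a+\<delta>'}. f t = f a + right_slope f a * (t - a)"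
    by blast
  define d where "d = min \<delta> \<delta>'"
  have "d > 0" "a + d \<in> {a..a+\<delta>}" "a + d \<in> {a..a+\<delta>'}"
    using assms(1) \<open>\<delta>' > 0\<close> by (auto simp: d_def)
  then have "f (a + d) = f a + right_slope f a * d" "f (a + d) = f a + s * d"
    using bspec[OF \<delta>', of "a + d"] assms(2)[of "a + d"] by simp_all
  then show ?thesis
    using \<open>d > 0\<close> by simp
qed

lemma PLo_right_slope:
  assumes "f \<in> PLo" "0 \<le> a" "a < 1"
  obtains \<delta> where "\<delta> > 0" "right_slope f a > 0"
    "\<And>t. t \<in> {a..a+\<delta>} \<Longrightarrow> f t = f a + right_slope f a * (t - a)"
proof -
  obtain \<eta> \<kappa> where \<eta>: "\<eta> > 0" "\<kappa> > 0" and aff: "\<And>t. t \<in> {a..a+\<eta>} \<Longrightarrow> f t = f a + \<kappa> * (t - a)"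
    using PLo_affine_right[OF assms] by blast
  have slope: "right_slope f a = \<kappa>"
    using right_slope_eqI[OF \<eta>(1) aff] .
  show ?thesis
  proof (rule that[OF \<eta>(1)])
    show "right_slope f a > 0"
      using \<eta>(2) slope by simp
    show "f t = f a + right_slope f a * (t - a)" if "t \<in> {a..a+\<eta>}" for t
      using aff[OF that] slope by simp
  qed
qed

lemma right_slope_the_inv_comp:
  assumes f: "f \<in> PLo" "f a = a" and h: "h \<in> PLo" "h a = a" and a: "0 \<le> a" "a < 1"
  shows "right_slope (the_inv h \<circ> f) a = right_slope f a / right_slope h a"
proof -
  obtain \<delta>1 where \<delta>1: "\<delta>1 > 0" "right_slope f a > 0"
    "\<And>t. t \<in> {a..a+\<delta>1} \<Longrightarrow> f t = f a + right_slope f a * (t - a)"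
    using PLo_right_slope[OF f(1) a] by blast
  obtain \<delta>2 where \<delta>2: "\<delta>2 > 0" "right_slope h a > 0"
    "\<And>t. t \<in> {a..a+\<delta>2} \<Longrightarrow> h t = h a + right_slope h a * (t - a)"
    using PLo_right_slope[OF h(1) a] by blast
  define \<sigma>1 \<sigma>2 where "\<sigma>1 = right_slope f a" and "\<sigma>2 = right_slope h a"
  have \<sigma>: "\<sigma>1 > 0" "\<sigma>2 > 0"
    using \<delta>1(2) \<delta>2(2) by (simp_all add: \<sigma>1_def \<sigma>2_def)
  define d where "d = min \<delta>1 (\<delta>2 * \<sigma>2 / \<sigma>1)"
  have "d > 0"
    using \<delta>1(1) \<delta>2(1) \<sigma> by (simp add: d_def)
  moreover have "(the_inv h \<circ> f) t = (the_inv h \<circ> f) a + (\<sigma>1 / \<sigma>2) * (t - a)" if t: "t \<in> {a..a+d}" for t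
  proof -
    define u where "u = a + \<sigma>1 * (t - a) / \<sigma>2"
    have "t - a \<le> \<delta>2 * \<sigma>2 / \<sigma>1" "t \<in> {a..a+\<delta>1}"
      using t by (auto simp: d_def)
    then have "\<sigma>1 * (t - a) \<le> \<delta>2 * \<sigma>2"
      using \<sigma> by (simp add: field_simps)
    then have "u \<in> {a..a+\<delta>2}"
      using t \<sigma> by (simp add: u_def pos_divide_le_eq)
    then have "h u = a + \<sigma>2 * (\<sigma>1 * (t - a) / \<sigma>2)"
      using \<delta>2(3)[of u] h(2) by (simp add: u_def \<sigma>2_def)
    also have "\<dots> = f t"
      using \<delta>1(3)[of t] \<open>t \<in> {a..a+\<delta>1}\<close> f(2) \<sigma> by (simp add: \<sigma>1_def)
    finally have "the_inv h (f t) = u"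
      using PLo_the_inv_apply[OF h(1), of u] by simp
    moreover have "the_inv h (f a) = a"
      using PLo_the_inv_fixes[OF h] f(2) by simp
    ultimately show ?thesis
      by (simp add: u_def)
  qed
  ultimately show ?thesis
    unfolding \<sigma>1_def \<sigma>2_def by (rule right_slope_eqI)
qed

lemma funpow_affine_expanding:
  fixes g :: "real \<Rightarrow> real"
  assumes "1 \<le> \<alpha>" "\<And>t. t \<in> {a..a+\<epsilon>} \<Longrightarrow> g t = a + \<alpha> * (t - a)" "0 \<le> z" "\<alpha> ^ k * z \<le> \<epsilon>"
  shows "(g ^^ k) (a + z) = a + \<alpha> ^ k * z"
  using assms(4)
proof (induction k)
  case (Suc k)
  have "\<alpha> ^ k * z \<le> \<alpha> ^ Suc k * z"
    using assms(1,3) by (intro mult_right_mono) auto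
  then have "(g ^^ k) (a + z) = a + \<alpha> ^ k * z" "\<alpha> ^ k * z \<le> \<epsilon>"
    using Suc by auto
  moreover have "0 \<le> \<alpha> ^ k * z"
    using assms(1,3) by simp
  ultimately show ?case
    using assms(2)[of "a + \<alpha> ^ k * z"] by simp
qed simp

lemma funpow_affine_contracting:
  fixes g :: "real \<Rightarrow> real"
  assumes "0 \<le> \<mu>" "\<mu> \<le> 1" "\<And>t. t \<in> {b-\<epsilon>..b} \<Longrightarrow> g t = b - \<mu> * (b - t)" "0 \<le> z" "z \<le> \<epsilon>"
  shows "(g ^^ k) (b - z) = b - \<mu> ^ k * z"
proof (induction k)
  case (Suc k)
  have "\<mu> ^ k * z \<le> 1 * z"
    using assms(1,2,4) by (intro mult_right_mono power_le_one) auto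
  moreover have "0 \<le> \<mu> ^ k * z"
    using assms(1,4) by simp
  ultimately show ?case
    using Suc assms(3)[of "b - \<mu> ^ k * z"] assms(5) by simp
qed simp

lemma funpow_right_inverse:
  fixes f h :: "'a \<Rightarrow> 'a"
  assumes "\<And>y. f (h y) = y"
  shows "(f ^^ n) ((h ^^ n) y) = y"
proof (induction n arbitrary: y)
  case (Suc n)
  have "(h ^^ Suc n) y = (h ^^ n) (h y)"
    by (simp only: funpow_Suc_right comp_apply)
  then have "(f ^^ Suc n) ((h ^^ Suc n) y) = f ((f ^^ n) ((h ^^ n) (h y)))"
    by simp
  then show ?case
    using Suc assms by simp
qed simp

lemma isCont_fixed_point_of_limit:
  assumes "isCont g L" "X \<longlonglongrightarrow> L" "(\<lambda>k. g (X k)) \<longlonglongrightarrow> L"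
  shows "g L = L"
  using LIMSEQ_unique[OF isCont_tendsto_compose[OF assms(1,2)] assms(3)] .

lemma affine_conj_homothety:
  fixes u \<kappa> \<sigma> \<tau> a b p :: real
  assumes "x \<noteq> x'" "\<kappa> \<noteq> 0"
    and "\<And>y. y \<in> {x, x'} \<Longrightarrow> u + \<kappa> * (a + \<sigma> * (y - a) - p) = b - \<tau> * (b - (u + \<kappa> * (y - p)))"
  shows "\<sigma> = \<tau>" "\<sigma> = 1 \<or> u + \<kappa> * (a - p) = b"
proof -
  have e1: "u + \<kappa> * (a + \<sigma> * (x - a) - p) = b - \<tau> * (b - (u + \<kappa> * (x - p)))"
    and e2: "u + \<kappa> * (a + \<sigma> * (x' - a) - p) = b - \<tau> * (b - (u + \<kappa> * (x' - p)))"
    using assms(3) by auto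
  have "(\<sigma> - \<tau>) * (\<kappa> * (x - x')) =
      (u + \<kappa> * (a + \<sigma> * (x - a) - p) - (b - \<tau> * (b - (u + \<kappa> * (x - p))))) -
      (u + \<kappa> * (a + \<sigma> * (x' - a) - p) - (b - \<tau> * (b - (u + \<kappa> * (x' - p)))))"
    by (simp add: algebra_simps)
  also have "\<dots> = 0"
    using e1 e2 by simp
  finally show "\<sigma> = \<tau>"
    using assms(1,2) by simp
  have "(1 - \<sigma>) * (u + \<kappa> * (a - p) - b) =
      u + \<kappa> * (a + \<sigma> * (x - a) - p) - (b - \<sigma> * (b - (u + \<kappa> * (x - p))))"
    by (simp add: algebra_simps)
  also have "\<dots> = 0"
    using e1 \<open>\<sigma> = \<tau>\<close> by simp
  finally show "\<sigma> = 1 \<or> u + \<kappa> * (a - p) = b"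
    by simp
qed

section \<open>Centralizers of bumps\<close>

definition restrict_id :: "real \<Rightarrow> real \<Rightarrow> (real \<Rightarrow> real) \<Rightarrow> real \<Rightarrow> real" where
  "restrict_id a b f t = (if t \<in> {a..b} then f t else t)"

locale PLo_bump =
  fixes K :: "(real \<Rightarrow> real) set" and g :: "real \<Rightarrow> real" and a b :: real
  assumes subgroup: "subgroup K PLo_group"
    and g_in: "g \<in> K"
    and orbital: "(a, b) \<in> orbitals g"
    and moves_up: "\<And>t. t \<in> {a<..<b} \<Longrightarrow> t < g t"
begin

lemma funpow_PLo: "g ^^ n \<in> PLo"
  using PLo_subgroup_funpow[OF subgroup g_in] PLo_subgroupD(1)[OF subgroup] by blast

lemma g_PLo: "g \<in> PLo"
  using funpow_PLo[of 1] by simp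

lemma bump_bounds: "0 \<le> a" "a < b" "b \<le> 1" "g a = a" "g b = b"
  using PLo_orbital_subset_unit[OF g_PLo orbital] orbital by (auto simp: orbitals_def)

lemma linear_near_a:
  obtains \<epsilon> \<alpha> where "\<epsilon> > 0" "a + \<epsilon> < b" "\<alpha> > 1" "\<And>t. t \<in> {a..a+\<epsilon>} \<Longrightarrow> g t = a + \<alpha> * (t - a)"
proof -
  have "a < 1"
    using bump_bounds(2,3) by linarith
  then obtain \<eta> \<kappa> where "\<eta> > 0" "\<kappa> > 0" and aff: "\<And>t. t \<in> {a..a+\<eta>} \<Longrightarrow> g t = g a + \<kappa> * (t - a)"
    using PLo_affine_right[OF g_PLo bump_bounds(1)] by blast
  define \<epsilon> where "\<epsilon> = min \<eta> ((b - a) / 2)"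
  have "\<epsilon> \<le> \<eta>" "\<epsilon> \<le> (b - a) / 2"
    unfolding \<epsilon>_def by (rule min.cobounded1, rule min.cobounded2)
  moreover have "g t = a + \<kappa> * (t - a)" if "t \<in> {a..a+\<epsilon>}" for t
    using aff[of t] that \<open>\<epsilon> \<le> \<eta>\<close> bump_bounds(4) by simp
  ultimately have \<epsilon>: "\<epsilon> > 0" "a + \<epsilon> < b" "\<And>t. t \<in> {a..a+\<epsilon>} \<Longrightarrow> g t = a + \<kappa> * (t - a)"
    using \<open>\<eta> > 0\<close> bump_bounds(2) by (auto simp: \<epsilon>_def)
  have "a + \<epsilon> < g (a + \<epsilon>)"
    using moves_up[of "a + \<epsilon>"] \<epsilon>(1,2) by simp
  moreover have "g (a + \<epsilon>) = a + \<kappa> * \<epsilon>"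
    using \<epsilon>(1) \<epsilon>(3)[of "a + \<epsilon>"] by simp
  ultimately have "\<epsilon> < \<kappa> * \<epsilon>"
    by linarith
  then have "\<kappa> > 1"
    using \<epsilon>(1) by (simp add: mult_less_cancel_right1)
  then show ?thesis
    using that \<epsilon> by blast
qed

lemma linear_near_b:
  obtains \<epsilon> \<mu> where "\<epsilon> > 0" "a < b - \<epsilon>" "0 < \<mu>" "\<mu> < 1" "\<And>t. t \<in> {b-\<epsilon>..b} \<Longrightarrow> g t = b - \<mu> * (b - t)"
proof -
  have "0 < b"
    using bump_bounds(1,2) by linarith
  then obtain \<eta> \<kappa> where "\<eta> > 0" "\<kappa> > 0" and aff: "\<And>t. t \<in> {b-\<eta>..b} \<Longrightarrow> g t = g b - \<kappa> * (b - t)"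
    using PLo_affine_left[OF g_PLo _ bump_bounds(3)] by blast
  define \<epsilon> where "\<epsilon> = min \<eta> ((b - a) / 2)"
  have "\<epsilon> \<le> \<eta>" "\<epsilon> \<le> (b - a) / 2"
    unfolding \<epsilon>_def by (rule min.cobounded1, rule min.cobounded2)
  moreover have "g t = b - \<kappa> * (b - t)" if "t \<in> {b-\<epsilon>..b}" for t
    using aff[of t] that \<open>\<epsilon> \<le> \<eta>\<close> bump_bounds(5) by simp
  ultimately have \<epsilon>: "\<epsilon> > 0" "a < b - \<epsilon>" "\<And>t. t \<in> {b-\<epsilon>..b} \<Longrightarrow> g t = b - \<kappa> * (b - t)"
    using \<open>\<eta> > 0\<close> bump_bounds(2) by (auto simp: \<epsilon>_def)
  have "b - \<epsilon> < g (b - \<epsilon>)"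
    using moves_up[of "b - \<epsilon>"] \<epsilon>(1,2) by simp
  moreover have "g (b - \<epsilon>) = b - \<kappa> * \<epsilon>"
    using \<epsilon>(1) \<epsilon>(3)[of "b - \<epsilon>"] by simp
  ultimately have "\<kappa> * \<epsilon> < \<epsilon>"
    by linarith
  then have "\<kappa> < 1"
    using \<epsilon>(1) by (simp add: mult_less_cancel_right2)
  then show ?thesis
    using that \<epsilon> \<open>\<kappa> > 0\<close> by blast
qed

lemma orbit_exceeds:
  assumes "a < p" "p < b" "q < b"
  obtains N where "q \<le> (g ^^ N) p"
proof (rule ccontr)
  assume "\<not> thesis"
  then have below: "(g ^^ k) p < q" for k
    using that by (meson not_le)
  define X where "X k = (g ^^ k) p" for k
  have mem: "X k \<in> {a<..<b}" if "p \<le> X k" for k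
    using that below[of k] assms by (auto simp: X_def)
  have ge: "p \<le> X k" for k
  proof (induction k)
    case (Suc k)
    then have "X k < X (Suc k)"
      using moves_up[OF mem[OF Suc]] by (simp add: X_def)
    with Suc show ?case
      by simp
  qed (simp add: X_def)
  have "incseq X"
    using moves_up[OF mem[OF ge]] by (intro incseq_SucI) (simp add: X_def less_imp_le)
  then obtain L where L: "X \<longlonglongrightarrow> L" "\<And>k. X k \<le> L"
    using incseq_convergent[of X q] below by (auto simp: X_def less_imp_le)
  have "L \<le> q"
    using L(1) below by (intro LIMSEQ_le_const2) (auto simp: X_def less_imp_le)
  then have L_in: "L \<in> {a<..<b}"
    using L(2)[of 0] ge[of 0] assms by auto
  have "(\<lambda>k. g (X k)) \<longlonglongrightarrow> L"
    using LIMSEQ_Suc[OF L(1)] by (simp add: X_def)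
  then have "g L = L"
    by (rule isCont_fixed_point_of_limit[OF PLo_isCont[OF g_PLo] L(1)])
  with moves_up[OF L_in] show False
    by simp
qed

lemma backward_orbit_reaches:
  assumes "a < t" "t < b" "a < q"
  obtains n s where "a < s" "s \<le> q" "(g ^^ n) s = t"
proof (rule ccontr)
  assume "\<not> thesis"
  define h where "h = the_inv g"
  have gh: "g (h y) = y" for y
    using PLo_apply_the_inv[OF g_PLo] by (simp add: h_def)
  have h_down: "a < h y" "h y < y" if "y \<in> {a<..<b}" for y
  proof -
    have "g a < g (h y)" "g (h y) < g y"
      using that gh[of y] bump_bounds(4) moves_up[OF that] by auto
    then show "a < h y" "h y < y"
      using PLo_less_iff[OF g_PLo] by blast+
  qed
  define X where "X k = (h ^^ k) t" for k
  have X: "a < X k \<and> X k \<le> t" for k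
  proof (induction k)
    case (Suc k)
    then have "X k \<in> {a<..<b}"
      using assms by auto
    then show ?case
      using Suc h_down[of "X k"] by (simp add: X_def)
  qed (simp add: X_def assms)
  have "decseq X"
  proof (rule decseq_SucI)
    fix k
    have "X k \<in> {a<..<b}"
      using X[of k] assms by auto
    then show "X (Suc k) \<le> X k"
      using h_down(2) by (simp add: X_def less_imp_le)
  qed
  have above: "q < X k" for k
  proof (rule ccontr)
    assume "\<not> q < X k"
    moreover have "(g ^^ k) (X k) = t"
      using funpow_right_inverse[of g h, OF gh] by (simp add: X_def)
    ultimately have thesis
      using that[of "X k" k] X[of k] by simp
    with \<open>\<not> thesis\<close> show False
      by blast
  qed
  obtain L where L: "X \<longlonglongrightarrow> L" "\<And>k. L \<le> X k"
    using decseq_convergent[of X q] \<open>decseq X\<close> above by (auto simp: less_imp_le)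
  have "q \<le> L"
    using L(1) above by (intro LIMSEQ_le_const) (auto simp: less_imp_le)
  then have L_in: "L \<in> {a<..<b}"
    using L(2)[of 0] X[of 0] assms by auto
  have "g (X (Suc k)) = X k" for k
    by (simp add: X_def gh)
  then have "(\<lambda>k. g (X (Suc k))) \<longlonglongrightarrow> L"
    using L(1) by simp
  then have "g L = L"
    by (rule isCont_fixed_point_of_limit[OF PLo_isCont[OF g_PLo] LIMSEQ_Suc[OF L(1)]])
  with moves_up[OF L_in] show False
    by simp
qed

definition bump_centralizer :: "(real \<Rightarrow> real) set" where
  "bump_centralizer = {c \<in> K. c \<circ> g = g \<circ> c \<and> c a = a \<and> c b = b}"

lemma centralizerD:
  assumes "c \<in> bump_centralizer"
  shows "c \<in> K" "c \<in> PLo" "c a = a" "c b = b" "c ((g ^^ n) x) = (g ^^ n) (c x)"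
proof -
  show "c \<in> K" "c a = a" "c b = b"
    using assms by (simp_all add: bump_centralizer_def)
  then show "c \<in> PLo"
    using PLo_subgroupD(1)[OF subgroup] by blast
  have "c (g y) = g (c y)" for y
    using assms by (simp add: bump_centralizer_def fun_eq_iff)
  then show "c ((g ^^ n) x) = (g ^^ n) (c x)"
    by (induction n) simp_all
qed

lemma centralizer_right_slope:
  assumes "c \<in> bump_centralizer"
  obtains \<delta> where "\<delta> > 0" "right_slope c a > 0"
    "\<And>t. t \<in> {a..a+\<delta>} \<Longrightarrow> c t = a + right_slope c a * (t - a)"
proof -
  have "a < 1"
    using bump_bounds(2,3) by linarith
  then obtain \<delta> where \<delta>: "\<delta> > 0" "right_slope c a > 0"
    and aff: "\<And>t. t \<in> {a..a+\<delta>} \<Longrightarrow> c t = c a + right_slope c a * (t - a)"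
    using PLo_right_slope[OF centralizerD(2)[OF assms] bump_bounds(1)] by blast
  show ?thesis
  proof (rule that[OF \<delta>])
    show "c t = a + right_slope c a * (t - a)" if "t \<in> {a..a+\<delta>}" for t
      using aff[OF that] centralizerD(3)[OF assms] by simp
  qed
qed

text \<open>Conjugating by powers of \<open>g\<close>, which expand the linear zone of \<open>g\<close> at \<open>a\<close>, carries the
  linearity of \<open>c\<close> on a tiny interval at \<open>a\<close> to the whole zone.\<close>
lemma centralizer_linear_near_a:
  assumes c: "c \<in> bump_centralizer" and "\<alpha> > 1" and g_lin: "\<And>t. t \<in> {a..a+\<epsilon>} \<Longrightarrow> g t = a + \<alpha> * (t - a)"
    and x: "a \<le> x" "x - a \<le> \<epsilon>" "right_slope c a * (x - a) \<le> \<epsilon>"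
  shows "c x = a + right_slope c a * (x - a)"
proof -
  define \<sigma> z where "\<sigma> = right_slope c a" and "z = x - a"
  obtain \<delta> where "\<delta> > 0" "\<sigma> > 0" and c_lin: "\<And>t. t \<in> {a..a+\<delta>} \<Longrightarrow> c t = a + \<sigma> * (t - a)"
    using centralizer_right_slope[OF c] unfolding \<sigma>_def by blast
  obtain n where n: "z / \<delta> < \<alpha> ^ n"
    using real_arch_pow[OF \<open>\<alpha> > 1\<close>] by blast
  define w where "w = z / \<alpha> ^ n"
  have "\<alpha> ^ n > 0"
    using \<open>\<alpha> > 1\<close> by simp
  have "z < \<delta> * \<alpha> ^ n"
    using n \<open>\<delta> > 0\<close> by (simp add: field_simps)
  moreover have "0 \<le> z"
    using x(1) by (simp add: z_def)
  ultimately have w: "0 \<le> w" "w \<le> \<delta>" "\<alpha> ^ n * w = z"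
    using \<open>\<alpha> ^ n > 0\<close> \<open>\<alpha> > 1\<close> pos_divide_le_eq[OF \<open>\<alpha> ^ n > 0\<close>, of z \<delta>]
    by (simp_all add: w_def)
  have "z \<le> \<epsilon>"
    using x(2) by (simp add: z_def)
  then have "(g ^^ n) (a + w) = a + z"
    using funpow_affine_expanding[where \<epsilon>=\<epsilon> and z=w and k=n, OF _ g_lin w(1)] \<open>\<alpha> > 1\<close> w(3)
    by simp
  moreover have "c (a + w) = a + \<sigma> * w"
    using c_lin[of "a + w"] w(1,2) by simp
  moreover have "(g ^^ n) (a + \<sigma> * w) = a + \<sigma> * z"
  proof -
    have "\<alpha> ^ n * (\<sigma> * w) = \<sigma> * z"
      by (simp only: mult.left_commute[of "\<alpha> ^ n" \<sigma> w] w(3))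
    moreover have "\<sigma> * z \<le> \<epsilon>"
      using x(3) by (simp add: \<sigma>_def z_def)
    ultimately have "\<alpha> ^ n * (\<sigma> * w) \<le> \<epsilon>"
      by linarith
    then have "(g ^^ n) (a + \<sigma> * w) = a + \<alpha> ^ n * (\<sigma> * w)"
      by (intro funpow_affine_expanding[OF _ g_lin]) (use \<open>\<alpha> > 1\<close> \<open>\<sigma> > 0\<close> w(1) in auto)
    with \<open>\<alpha> ^ n * (\<sigma> * w) = \<sigma> * z\<close> show ?thesis
      by simp
  qed
  ultimately have "c (a + z) = a + \<sigma> * z"
    using centralizerD(5)[OF c, of n "a + w"] by simp
  then show ?thesis
    by (simp add: \<sigma>_def z_def)
qed

lemma centralizer_linear_near_b:
  assumes c: "c \<in> bump_centralizer" and "\<epsilon> > 0" "0 < \<mu>" "\<mu> < 1"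
    and g_lin: "\<And>t. t \<in> {b-\<epsilon>..b} \<Longrightarrow> g t = b - \<mu> * (b - t)"
  obtains \<tau> where "\<And>y. y \<in> {b-\<epsilon>..b} \<Longrightarrow> c y \<in> {b-\<epsilon>..b} \<Longrightarrow> c y = b - \<tau> * (b - y)"
proof -
  have "0 < b"
    using bump_bounds(1,2) by linarith
  then obtain \<eta> \<kappa> where "\<eta> > 0" and aff: "\<And>t. t \<in> {b-\<eta>..b} \<Longrightarrow> c t = c b - \<kappa> * (b - t)"
    using PLo_affine_left[OF centralizerD(2)[OF c] _ bump_bounds(3)] by blast
  have "c y = b - \<kappa> * (b - y)" if y: "y \<in> {b-\<epsilon>..b}" "c y \<in> {b-\<epsilon>..b}" for y
  proof -
    define z z' where "z = b - y" and "z' = b - c y"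
    have z: "0 \<le> z" "z \<le> \<epsilon>" "0 \<le> z'" "z' \<le> \<epsilon>"
      using y by (auto simp: z_def z'_def)
    obtain m where m: "\<mu> ^ m < \<eta> / \<epsilon>"
      using real_arch_pow_inv[of "\<eta> / \<epsilon>" \<mu>] \<open>\<eta> > 0\<close> \<open>\<epsilon> > 0\<close> assms(3,4) by auto
    have "\<mu> ^ m > 0"
      using assms(3) by simp
    have "\<mu> ^ m * z \<le> \<mu> ^ m * \<epsilon>"
      using z \<open>\<mu> ^ m > 0\<close> by simp
    also have "\<dots> < \<eta>"
      using m \<open>\<epsilon> > 0\<close> by (simp add: field_simps)
    finally have "b - \<mu> ^ m * z \<in> {b-\<eta>..b}"
      using z \<open>\<mu> ^ m > 0\<close> by simp
    then have "c ((g ^^ m) y) = b - \<kappa> * (\<mu> ^ m * z)"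
      using funpow_affine_contracting[where \<epsilon>=\<epsilon> and z=z and k=m, OF _ _ g_lin z(1,2)] aff[of "b - \<mu> ^ m * z"] assms(3,4)
        centralizerD(4)[OF c] by (simp add: z_def)
    moreover have "(g ^^ m) (c y) = b - \<mu> ^ m * z'"
      using funpow_affine_contracting[where \<epsilon>=\<epsilon> and z=z' and k=m, OF _ _ g_lin z(3,4)] assms(3,4) by (simp add: z'_def)
    ultimately have "\<kappa> * (\<mu> ^ m * z) = \<mu> ^ m * z'"
      using centralizerD(5)[OF c, of m y] by linarith
    then have "\<mu> ^ m * (\<kappa> * z) = \<mu> ^ m * z'"
      by (simp only: mult.left_commute[of \<kappa> "\<mu> ^ m" z])
    moreover have "\<mu> ^ m \<noteq> 0"
      using \<open>\<mu> ^ m > 0\<close> by linarith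
    ultimately have "\<kappa> * z = z'"
      using mult_left_cancel by blast
    then show ?thesis
      unfolding z_def z'_def by linarith
  qed
  then show ?thesis
    using that by blast
qed

lemma centralizer_slope_one_imp_id:
  assumes c: "c \<in> bump_centralizer" and slope: "right_slope c a = 1" and t: "t \<in> {a..b}"
  shows "c t = t"
proof -
  obtain \<epsilon> \<alpha> where "\<epsilon> > 0" "a + \<epsilon> < b" "\<alpha> > 1" and g_lin: "\<And>t. t \<in> {a..a+\<epsilon>} \<Longrightarrow> g t = a + \<alpha> * (t - a)"
    using linear_near_a by blast
  have near_a: "c x = x" if "x \<in> {a..a+\<epsilon>}" for x
    using centralizer_linear_near_a[where \<epsilon>=\<epsilon> and x=x, OF c \<open>\<alpha> > 1\<close> g_lin] that slope by simp
  consider "t \<le> a + \<epsilon>" | "t = b" | "a + \<epsilon> < t" "t < b"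
    using t by fastforce
  then show ?thesis
  proof cases
    case 3
    have "a < t" "a < a + \<epsilon>"
      using 3 \<open>\<epsilon> > 0\<close> by auto
    then obtain n s where s: "a < s" "s \<le> a + \<epsilon>" "(g ^^ n) s = t"
      using backward_orbit_reaches[of t "a + \<epsilon>"] 3(2) by blast
    then have "c t = (g ^^ n) (c s)"
      using centralizerD(5)[OF c, of n s] by simp
    then show ?thesis
      using near_a[of s] s by simp
  qed (use t near_a centralizerD(4)[OF c] in auto)
qed

lemma affine_transport_to_b:
  assumes "a < p" "p < b" "\<epsilon> > 0" "r > 0"
  obtains N \<eta> \<kappa> where "0 < \<eta>" "\<eta> \<le> r" "\<kappa> > 0"
    "\<And>t. t \<in> {p..p+\<eta>} \<Longrightarrow> (g ^^ N) t = (g ^^ N) p + \<kappa> * (t - p)"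
    "\<And>t. t \<in> {p..p+\<eta>} \<Longrightarrow> (g ^^ N) t \<in> {b-\<epsilon>..b}"
proof -
  obtain N where N: "b - \<epsilon> \<le> (g ^^ N) p"
    using orbit_exceeds[OF assms(1,2), of "b - \<epsilon>"] assms(3) by auto
  have "0 \<le> p" "p < 1"
    using assms(1,2) bump_bounds(1,3) by linarith+
  then obtain \<eta>0 \<kappa> where "\<eta>0 > 0" "\<kappa> > 0"
    and aff: "\<And>t. t \<in> {p..p+\<eta>0} \<Longrightarrow> (g ^^ N) t = (g ^^ N) p + \<kappa> * (t - p)"
    using PLo_affine_right[OF funpow_PLo] by blast
  define \<eta> where "\<eta> = min (min \<eta>0 r) (b - p)"
  have \<eta>: "0 < \<eta>" "\<eta> \<le> r" "\<eta> \<le> \<eta>0" "p + \<eta> \<le> b"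
    using \<open>\<eta>0 > 0\<close> assms(2,4) by (auto simp: \<eta>_def)
  have "(g ^^ N) t \<in> {b-\<epsilon>..b}" if "t \<in> {p..p+\<eta>}" for t
  proof -
    have "(g ^^ N) p \<le> (g ^^ N) t" "(g ^^ N) t \<le> (g ^^ N) b"
      using that \<eta>(4) PLo_le_iff[OF funpow_PLo] by auto
    moreover have "(g ^^ N) b = b"
      using bump_bounds(5) by (induction N) simp_all
    ultimately show ?thesis
      using N by simp
  qed
  moreover have "(g ^^ N) t = (g ^^ N) p + \<kappa> * (t - p)" if "t \<in> {p..p+\<eta>}" for t
    using aff[of t] that \<eta>(3) by simp
  ultimately show ?thesis
    using that \<eta>(1,2) \<open>\<kappa> > 0\<close> by blast
qed

text \<open>Near \<open>a\<close> an element \<open>c\<close> of the centralizer is a homothety centred at \<open>a\<close>, near \<open>b\<close> one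
  centred at \<open>b\<close>, and a power of \<open>g\<close> maps a small interval near \<open>a\<close> affinely into the zone near \<open>b\<close>.
  If the slope of \<open>c\<close> is close to \<open>1\<close>, then \<open>c\<close> keeps that interval inside the affine zone, and
  \<open>affine_conj_homothety\<close> forces the slope to be \<open>1\<close>.\<close>
lemma centralizer_slope_isolated:
  obtains \<delta> where "\<delta> > 0"
    "\<And>c. c \<in> bump_centralizer \<Longrightarrow> \<bar>right_slope c a - 1\<bar> < \<delta> \<Longrightarrow> right_slope c a = 1"
proof -
  obtain \<epsilon> \<alpha> where \<epsilon>: "\<epsilon> > 0" "a + \<epsilon> < b" "\<alpha> > 1"
    and g_a: "\<And>t. t \<in> {a..a+\<epsilon>} \<Longrightarrow> g t = a + \<alpha> * (t - a)"
    using linear_near_a by blast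
  obtain \<epsilon>' \<mu> where \<epsilon>': "\<epsilon>' > 0" "a < b - \<epsilon>'" "0 < \<mu>" "\<mu> < 1"
    and g_b: "\<And>t. t \<in> {b-\<epsilon>'..b} \<Longrightarrow> g t = b - \<mu> * (b - t)"
    using linear_near_b by blast
  define p where "p = a + \<epsilon> / 4"
  have "a < p" "p < b" "\<epsilon> / 8 > 0"
    using \<epsilon> by (auto simp: p_def)
  obtain \<eta> \<kappa> N where \<eta>: "0 < \<eta>" "\<eta> \<le> \<epsilon> / 8" "\<kappa> > 0"
    and F_lin: "\<And>t. t \<in> {p..p+\<eta>} \<Longrightarrow> (g ^^ N) t = (g ^^ N) p + \<kappa> * (t - p)"
    and F_b: "\<And>t. t \<in> {p..p+\<eta>} \<Longrightarrow> (g ^^ N) t \<in> {b-\<epsilon>'..b}"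
    by (rule affine_transport_to_b[OF \<open>a < p\<close> \<open>p < b\<close> \<open>\<epsilon>' > 0\<close> \<open>\<epsilon> / 8 > 0\<close>]) blast
  define \<delta> where "\<delta> = \<eta> / (2 * \<epsilon>)"
  have "\<delta> > 0"
    using \<eta>(1) \<epsilon>(1) by (simp add: \<delta>_def)
  moreover have "right_slope c a = 1"
    if c: "c \<in> bump_centralizer" and close: "\<bar>right_slope c a - 1\<bar> < \<delta>" for c
  proof -
    define \<sigma> where "\<sigma> = right_slope c a"
    obtain \<tau> where c_b: "\<And>y. y \<in> {b-\<epsilon>'..b} \<Longrightarrow> c y \<in> {b-\<epsilon>'..b} \<Longrightarrow> c y = b - \<tau> * (b - y)"
      using centralizer_linear_near_b[OF c \<epsilon>'(1,3,4) g_b] by blast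
    have key: "(g ^^ N) p + \<kappa> * (a + \<sigma> * (x - a) - p) = b - \<tau> * (b - ((g ^^ N) p + \<kappa> * (x - p)))"
      if x: "x \<in> {p + \<eta> / 4, p + \<eta> / 2}" for x
    proof -
      have x_J: "x \<in> {p..p+\<eta>}" and x_a: "a \<le> x" "x - a \<le> \<epsilon> / 2"
        using x \<eta> \<epsilon>(1) by (auto simp: p_def)
      have "\<bar>\<sigma> - 1\<bar> * (x - a) \<le> (\<eta> / (2 * \<epsilon>)) * (\<epsilon> / 2)"
        using close x_a by (intro mult_mono) (auto simp: \<sigma>_def \<delta>_def)
      also have "\<dots> = \<eta> / 4"
        using \<epsilon>(1) by (simp add: field_simps)
      finally have small: "\<bar>\<sigma> - 1\<bar> * (x - a) \<le> \<eta> / 4" .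
      have "(\<sigma> - 1) * (x - a) \<le> \<bar>\<sigma> - 1\<bar> * (x - a)"
        using x_a(1) by (intro mult_right_mono) auto
      moreover have "- \<bar>\<sigma> - 1\<bar> * (x - a) \<le> (\<sigma> - 1) * (x - a)"
        using x_a(1) by (intro mult_right_mono) auto
      moreover have "\<sigma> * (x - a) = (x - a) + (\<sigma> - 1) * (x - a)"
        by (simp add: algebra_simps)
      ultimately have "\<sigma> * (x - a) \<le> \<epsilon>" and cx_J: "a + \<sigma> * (x - a) \<in> {p..p+\<eta>}"
        using small x x_a \<eta>(2) by (auto simp: p_def minus_mult_left[symmetric])
      then have cx: "c x = a + \<sigma> * (x - a)"
        using centralizer_linear_near_a[where \<epsilon>=\<epsilon> and x=x, OF c \<epsilon>(3) g_a x_a(1)] x_a(2) \<epsilon>(1)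
        by (simp add: \<sigma>_def)
      have "(g ^^ N) (c x) = c ((g ^^ N) x)"
        using centralizerD(5)[OF c] by simp
      moreover have "c ((g ^^ N) x) \<in> {b-\<epsilon>'..b}"
        using F_b[OF cx_J] cx centralizerD(5)[OF c, of N x] by simp
      then have "c ((g ^^ N) x) = b - \<tau> * (b - (g ^^ N) x)"
        by (rule c_b[OF F_b[OF x_J]])
      ultimately show ?thesis
        using F_lin[OF x_J] F_lin[OF cx_J] cx by simp
    qed
    have "\<sigma> = 1 \<or> (g ^^ N) p + \<kappa> * (a - p) = b"
      using affine_conj_homothety(2)[where x="p + \<eta> / 4" and x'="p + \<eta> / 2", OF _ _ key] \<eta>(1,3) by simp
    moreover have "(g ^^ N) p \<le> b" "\<kappa> * (a - p) < 0"
      using F_b[of p] \<eta>(1,3) \<open>a < p\<close> by (auto simp: mult_pos_neg)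
    ultimately show ?thesis
      by (auto simp: \<sigma>_def)
  qed
  ultimately show ?thesis
    using that by blast
qed

lemma centralizer_the_inv_comp:
  assumes c1: "c1 \<in> bump_centralizer" and c2: "c2 \<in> bump_centralizer"
  shows "the_inv c2 \<circ> c1 \<in> bump_centralizer"
proof -
  note C1 = centralizerD[OF c1] and C2 = centralizerD[OF c2]
  have "the_inv c2 \<circ> c1 \<in> K"
    using PLo_subgroupD(3,4)[OF subgroup] C1(1) C2(1) by blast
  moreover have "the_inv c2 (g y) = g (the_inv c2 y)" for y
  proof -
    have "c2 (g (the_inv c2 y)) = g y"
      using C2(5)[of 1 "the_inv c2 y"] PLo_apply_the_inv[OF C2(2)] by simp
    then show ?thesis
      using PLo_the_inv_apply[OF C2(2)] by metis
  qed
  then have "(the_inv c2 \<circ> c1) \<circ> g = g \<circ> (the_inv c2 \<circ> c1)"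
    using C1(5)[of 1] by (simp add: fun_eq_iff)
  moreover have "the_inv c2 a = a" "the_inv c2 b = b"
    using PLo_the_inv_fixes[OF C2(2)] C2(3,4) by auto
  ultimately show ?thesis
    using C1(3,4) by (simp add: bump_centralizer_def)
qed

lemma centralizer_right_slope_quotient:
  assumes "c1 \<in> bump_centralizer" "c2 \<in> bump_centralizer"
  shows "right_slope (the_inv c2 \<circ> c1) a = right_slope c1 a / right_slope c2 a"
proof -
  have "0 \<le> a" "a < 1"
    using bump_bounds(1-3) by linarith+
  then show ?thesis
    using right_slope_the_inv_comp centralizerD(2,3)[OF assms(1)] centralizerD(2,3)[OF assms(2)] by blast
qed

lemma countable_centralizer_slopes: "countable ((\<lambda>c. right_slope c a) ` bump_centralizer)"
proof -
  obtain \<delta> where "\<delta> > 0"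
    and isolated: "\<And>c. c \<in> bump_centralizer \<Longrightarrow> \<bar>right_slope c a - 1\<bar> < \<delta> \<Longrightarrow> right_slope c a = 1"
    using centralizer_slope_isolated by blast
  define S where "S = (\<lambda>c. right_slope c a) ` bump_centralizer"
  have "S \<subseteq> left_gap_ends S"
  proof
    fix s
    assume "s \<in> S"
    then obtain c1 where c1: "c1 \<in> bump_centralizer" "s = right_slope c1 a"
      by (auto simp: S_def)
    have "s > 0"
      using centralizer_right_slope[OF c1(1)] c1(2) by blast
    have "s' \<notin> {s<..<s * (1 + \<delta>)}" if "s' \<in> S" for s'
    proof
      assume s': "s' \<in> {s<..<s * (1 + \<delta>)}"
      obtain c2 where c2: "c2 \<in> bump_centralizer" "s' = right_slope c2 a"
        using \<open>s' \<in> S\<close> by (auto simp: S_def)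
      have "\<bar>s' / s - 1\<bar> < \<delta>" "s' / s \<noteq> 1"
        using s' \<open>s > 0\<close> by (auto simp: field_simps)
      moreover have "right_slope (the_inv c1 \<circ> c2) a = s' / s"
        using centralizer_right_slope_quotient[OF c2(1) c1(1)] c1(2) c2(2) by simp
      ultimately show False
        using isolated[OF centralizer_the_inv_comp[OF c2(1) c1(1)]] by simp
    qed
    moreover have "s < s * (1 + \<delta>)"
      using \<open>s > 0\<close> \<open>\<delta> > 0\<close> by simp
    ultimately show "s \<in> left_gap_ends S"
      using \<open>s \<in> S\<close> unfolding left_gap_ends_def by blast
  qed
  then show ?thesis
    unfolding S_def using countable_left_gap_ends countable_subset by blast
qed

lemma centralizer_restrict_eq_if_slope_eq:
  assumes c: "c1 \<in> bump_centralizer" "c2 \<in> bump_centralizer" and eq: "right_slope c1 a = right_slope c2 a"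
  shows "restrict_id a b c1 = restrict_id a b c2"
proof -
  have "right_slope c2 a > 0"
    using centralizer_right_slope[OF c(2)] by blast
  then have "right_slope (the_inv c2 \<circ> c1) a = 1"
    using centralizer_right_slope_quotient[OF c] eq by simp
  then have "the_inv c2 (c1 t) = t" if "t \<in> {a..b}" for t
    using centralizer_slope_one_imp_id[OF centralizer_the_inv_comp[OF c] _ that] by simp
  then have "c1 t = c2 t" if "t \<in> {a..b}" for t
    using PLo_apply_the_inv[OF centralizerD(2)[OF c(2)], of "c1 t"] that by simp
  then show ?thesis
    by (simp add: restrict_id_def fun_eq_iff)
qed

lemma countable_centralizer_restrictions: "countable (restrict_id a b ` bump_centralizer)"
  using countable_centralizer_slopes centralizer_restrict_eq_if_slope_eq by (rule countable_image_through)

text \<open>The quotient fixes \<open>b\<close> because it maps the orbital \<open>(a, b)\<close> of \<open>g\<close> to an orbital of \<open>g\<close>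
  with the same left end.\<close>
lemma the_inv_comp_in_centralizer:
  assumes x: "x \<in> K" "x0 \<in> K" and conj: "x0 \<circ> g \<circ> the_inv x0 = x \<circ> g \<circ> the_inv x" and "x0 a = x a"
  shows "the_inv x0 \<circ> x \<in> bump_centralizer"
proof -
  define c where "c = the_inv x0 \<circ> x"
  have P: "x \<in> PLo" "x0 \<in> PLo"
    using x PLo_subgroupD(1)[OF subgroup] by auto
  have "c \<in> K"
    using PLo_subgroupD(3,4)[OF subgroup] x by (simp add: c_def)
  then have "c \<in> PLo"
    using PLo_subgroupD(1)[OF subgroup] by auto
  have comm: "c (g y) = g (c y)" for y
  proof -
    have "x0 (g (the_inv x0 (x y))) = x (g y)"
      using fun_cong[OF conj, of "x y"] PLo_the_inv_apply[OF P(1)] by simp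
    then show ?thesis
      using PLo_the_inv_apply[OF P(2)] by (metis c_def comp_apply)
  qed
  have "c a = a"
    using \<open>x0 a = x a\<close> PLo_the_inv_apply[OF P(2)] by (metis c_def comp_apply)
  have "c \<circ> g \<circ> the_inv c = g"
    using comm PLo_apply_the_inv[OF \<open>c \<in> PLo\<close>] by (simp add: fun_eq_iff)
  then have "(a, c b) \<in> orbitals g"
    using PLo_orbital_conj[OF \<open>c \<in> PLo\<close> orbital] \<open>c a = a\<close> by simp
  then have "c b = b"
    using orbitals_same_left_end orbital by blast
  then show ?thesis
    using \<open>c \<in> K\<close> comm \<open>c a = a\<close> by (simp add: bump_centralizer_def c_def fun_eq_iff)
qed

end

section \<open>Subgroups with countably many commutators\<close>

lemma PLo_orbital_bump:
  assumes K: "subgroup K PLo_group" and "g \<in> K" and ab: "(a, b) \<in> orbitals g"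
  obtains h where "PLo_bump K h a b"
proof -
  have g: "g \<in> PLo"
    using PLo_subgroupD(1)[OF K] \<open>g \<in> K\<close> by blast
  consider "\<forall>t\<in>{a<..<b}. t < g t" | "\<forall>t\<in>{a<..<b}. g t < t"
    using PLo_orbital_direction[OF g ab] by blast
  then show ?thesis
  proof cases
    case 1
    then have "PLo_bump K g a b"
      using K \<open>g \<in> K\<close> ab by (simp add: PLo_bump_def)
    then show ?thesis
      by (rule that)
  next
    case 2
    have up: "t < the_inv g t" if "t \<in> {a<..<b}" for t
    proof -
      have "g t < g (the_inv g t)"
        using 2 that PLo_apply_the_inv[OF g] by simp
      then show ?thesis
        using PLo_less_iff[OF g] by blast
    qed
    then have "the_inv g t \<noteq> t" if "t \<in> {a<..<b}" for t
      using that by fastforce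
    moreover have "the_inv g a = a" "the_inv g b = b"
      using PLo_the_inv_fixes[OF g] ab by (auto simp: orbitals_def)
    ultimately have "(a, b) \<in> orbitals (the_inv g)"
      using ab by (simp add: orbitals_def)
    then have "PLo_bump K (the_inv g) a b"
      using K PLo_subgroupD(4)[OF K \<open>g \<in> K\<close>] up by (simp add: PLo_bump_def)
    then show ?thesis
      by (rule that)
  qed
qed

text \<open>Elements \<open>x\<close> of \<open>K\<close> with the same conjugate \<open>x \<circ> h \<circ> x\<inverse>\<close> and the same point \<open>x a\<close> differ by
  an element of the centralizer of the bump \<open>h\<close>. Both data range over countable sets: the conjugate
  is the commutator \<open>[x, h]\<close> followed by \<open>h\<close>, and \<open>x a\<close> is the left end of an orbital of it.\<close>
lemma countable_orbital_restrictions: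
  assumes K: "subgroup K PLo_group" and "countable D"
    and comm: "\<And>x y. x \<in> K \<Longrightarrow> y \<in> K \<Longrightarrow> x \<circ> y \<circ> the_inv x \<circ> the_inv y \<in> D"
    and "g \<in> K" "(a, b) \<in> orbitals g"
  shows "countable (restrict_id a b ` K)"
proof -
  obtain h where "PLo_bump K h a b"
    using PLo_orbital_bump[OF K \<open>g \<in> K\<close> \<open>(a, b) \<in> orbitals g\<close>] by blast
  then interpret PLo_bump K h a b .
  define key where "key x = (x \<circ> h \<circ> the_inv x, x a)" for x :: "real \<Rightarrow> real"
  have "key x \<in> Sigma ((\<lambda>d. d \<circ> h) ` D) (\<lambda>k. left_gap_ends {t. k t = t})" if "x \<in> K" for x
  proof -
    have "x \<in> PLo"
      using PLo_subgroupD(1)[OF K] that by blast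
    have "(x \<circ> h \<circ> the_inv x \<circ> the_inv h) \<circ> h = x \<circ> h \<circ> the_inv x"
      using PLo_the_inv_comp[OF g_PLo] by (simp add: comp_assoc)
    then have "x \<circ> h \<circ> the_inv x \<in> (\<lambda>d. d \<circ> h) ` D"
      using comm[OF that g_in] by (rule image_eqI[OF sym])
    moreover have "x a \<in> left_gap_ends {t. (x \<circ> h \<circ> the_inv x) t = t}"
      using orbital_left_gap_end[OF PLo_orbital_conj[OF \<open>x \<in> PLo\<close> orbital]] .
    ultimately show ?thesis
      by (simp add: key_def)
  qed
  then have "key ` K \<subseteq> Sigma ((\<lambda>d. d \<circ> h) ` D) (\<lambda>k. left_gap_ends {t. k t = t})"
    by blast
  moreover have "countable (Sigma ((\<lambda>d. d \<circ> h) ` D) (\<lambda>k. left_gap_ends {t. k t = t}))"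
    using \<open>countable D\<close> countable_left_gap_ends by (intro countable_SIGMA countable_image)
  ultimately have "countable (key ` K)"
    by (rule countable_subset)
  define rep where "rep v = inv_into K key v" for v
  have "restrict_id a b ` K \<subseteq>
      (\<Union>v\<in>key ` K. (\<lambda>r. restrict_id a b (rep v \<circ> r)) ` (restrict_id a b ` bump_centralizer))"
  proof
    fix r
    assume "r \<in> restrict_id a b ` K"
    then obtain x where x: "x \<in> K" "r = restrict_id a b x"
      by blast
    define x0 where "x0 = rep (key x)"
    have x0: "x0 \<in> K" "key x0 = key x"
      using x(1) by (simp_all add: x0_def rep_def inv_into_into f_inv_into_f)
    then have "the_inv x0 \<circ> x \<in> bump_centralizer"
      using the_inv_comp_in_centralizer[OF x(1) x0(1)] by (simp add: key_def)
    moreover have "x0 \<in> PLo"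
      using PLo_subgroupD(1)[OF K] x0(1) by blast
    then have "r = restrict_id a b (x0 \<circ> restrict_id a b (the_inv x0 \<circ> x))"
      by (simp add: x(2) restrict_id_def fun_eq_iff PLo_apply_the_inv)
    ultimately show "r \<in> (\<Union>v\<in>key ` K. (\<lambda>r. restrict_id a b (rep v \<circ> r)) ` (restrict_id a b ` bump_centralizer))"
      using x(1) unfolding x0_def by blast
  qed
  moreover have "countable (\<Union>v\<in>key ` K. (\<lambda>r. restrict_id a b (rep v \<circ> r)) ` (restrict_id a b ` bump_centralizer))"
    by (rule countable_UN[OF \<open>countable (key ` K)\<close> countable_image[OF countable_centralizer_restrictions]])
  ultimately show ?thesis
    using countable_subset by blast
qed

lemma orbital_restrict_left_gap_end:
  assumes "(p, q) \<in> orbitals x" "a < p" "p < b"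
  shows "p \<in> left_gap_ends {t. restrict_id a b x t = t}"
proof -
  have "restrict_id a b x t \<noteq> t" if "t \<in> {p<..<min q b}" for t
    using that assms by (auto simp: restrict_id_def orbitals_def)
  then have "{p<..<min q b} \<inter> {t. restrict_id a b x t = t} = {}"
    by blast
  moreover have "p < min q b" "restrict_id a b x p = p"
    using assms by (auto simp: restrict_id_def orbitals_def)
  ultimately show ?thesis
    unfolding left_gap_ends_def by (intro CollectI conjI exI[of _ "min q b"]) simp_all
qed

lemma orbital_restrict_right_gap_end:
  assumes "(p, q) \<in> orbitals x" "a < q" "q < b"
  shows "q \<in> right_gap_ends {t. restrict_id a b x t = t}"
proof -
  have "restrict_id a b x t \<noteq> t" if "t \<in> {max p a<..<q}" for t
    using that assms by (auto simp: restrict_id_def orbitals_def)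
  then have "{max p a<..<q} \<inter> {t. restrict_id a b x t = t} = {}"
    by blast
  moreover have "max p a < q" "restrict_id a b x q = q"
    using assms by (auto simp: restrict_id_def orbitals_def)
  ultimately show ?thesis
    unfolding right_gap_ends_def by (intro CollectI conjI exI[of _ "max p a"]) simp_all
qed

lemma orbital_left_end_cases:
  assumes "(p, q) \<in> orbitals x" "{p<..<q} \<subseteq> U" and U: "U = (\<Union>(a, b)\<in>J. {a<..<b})"
  shows "p \<in> (\<Union>(a, b)\<in>J. left_gap_ends {t. restrict_id a b x t = t}) \<union> left_gap_ends (- U)"
proof (cases "p \<in> U")
  case True
  then obtain a b where "(a, b) \<in> J" "a < p" "p < b"
    unfolding U by auto
  moreover have "p \<in> left_gap_ends {t. restrict_id a b x t = t}"
    by (rule orbital_restrict_left_gap_end[OF assms(1) \<open>a < p\<close> \<open>p < b\<close>])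
  ultimately show ?thesis
    by blast
next
  case False
  moreover have "p < q"
    using assms(1) by (simp add: orbitals_def)
  ultimately have "p \<in> left_gap_ends (- U)"
    using assms(2) unfolding left_gap_ends_def by blast
  then show ?thesis
    by blast
qed

lemma orbital_right_end_cases:
  assumes "(p, q) \<in> orbitals x" "{p<..<q} \<subseteq> U" and U: "U = (\<Union>(a, b)\<in>J. {a<..<b})"
  shows "q \<in> (\<Union>(a, b)\<in>J. right_gap_ends {t. restrict_id a b x t = t}) \<union> right_gap_ends (- U)"
proof (cases "q \<in> U")
  case True
  then obtain a b where "(a, b) \<in> J" "a < q" "q < b"
    unfolding U by auto
  moreover have "q \<in> right_gap_ends {t. restrict_id a b x t = t}"
    by (rule orbital_restrict_right_gap_end[OF assms(1) \<open>a < q\<close> \<open>q < b\<close>])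
  ultimately show ?thesis
    by blast
next
  case False
  moreover have "p < q"
    using assms(1) by (simp add: orbitals_def)
  ultimately have "q \<in> right_gap_ends (- U)"
    using assms(2) unfolding right_gap_ends_def by blast
  then show ?thesis
    by blast
qed

lemma countable_interval_subcover:
  fixes Ob :: "(real \<times> real) set"
  obtains O0 where "countable O0" "O0 \<subseteq> Ob" "(\<Union>(a, b)\<in>O0. {a<..<b}) = (\<Union>(a, b)\<in>Ob. {a<..<b})"
proof -
  define I :: "real \<times> real \<Rightarrow> real set" where "I = (\<lambda>(a, b). {a<..<b})"
  obtain F where F: "F \<subseteq> I ` Ob" "countable F" "\<Union>F = \<Union>(I ` Ob)"
  proof (rule Lindelof[of "I ` Ob"])
    show "open S" if "S \<in> I ` Ob" for S
      using that unfolding I_def by auto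
  qed (rule that)
  have "\<exists>O0. countable O0 \<and> O0 \<subseteq> Ob \<and> F = I ` O0"
    by (rule iffD1[OF countable_subset_image]) (use F in blast)
  then obtain O0 where "countable O0" "O0 \<subseteq> Ob" "F = I ` O0"
    by blast
  with F(3) show ?thesis
    using that unfolding I_def by blast
qed

text \<open>By Lindelof, countably many orbitals already cover the union \<open>U\<close> of all orbitals, so an end of
  an orbital is an end of a gap either in the fixed point set of one of countably many restrictions
  or in the complement of \<open>U\<close>.\<close>
lemma countable_orbitals_of_subgroup:
  assumes restr: "\<And>x a b. x \<in> K \<Longrightarrow> (a, b) \<in> orbitals x \<Longrightarrow> countable (restrict_id a b ` K)"
  shows "countable (\<Union>x\<in>K. orbitals x)"
proof -
  define Ob where "Ob = (\<Union>x\<in>K. orbitals x)"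
  define U where "U = (\<Union>(a, b)\<in>Ob. {a<..<b})"
  obtain O0 where O0: "countable O0" "O0 \<subseteq> Ob" "U = (\<Union>(a, b)\<in>O0. {a<..<b})"
    using countable_interval_subcover[of Ob] unfolding U_def by metis
  define RO where "RO = (\<Union>(a, b)\<in>O0. restrict_id a b ` K)"
  define L R where
    "L = (\<Union>r\<in>RO. left_gap_ends {t. r t = t}) \<union> left_gap_ends (- U)" and
    "R = (\<Union>r\<in>RO. right_gap_ends {t. r t = t}) \<union> right_gap_ends (- U)"
  have "countable RO"
    unfolding RO_def
  proof (rule countable_UN[OF O0(1)])
    fix ab
    assume "ab \<in> O0"
    then show "countable (case ab of (a, b) \<Rightarrow> restrict_id a b ` K)"
      using O0(2) restr by (cases ab) (auto simp: Ob_def)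
  qed
  then have "countable L" "countable R"
    unfolding L_def R_def
    by (intro countable_Un countable_UN countable_left_gap_ends countable_right_gap_ends; assumption)+
  moreover have "Ob \<subseteq> L \<times> R"
  proof (safe)
    fix p q
    assume "(p, q) \<in> Ob"
    then obtain x where x: "x \<in> K" "(p, q) \<in> orbitals x"
      by (auto simp: Ob_def)
    have "{p<..<q} \<subseteq> U"
      using \<open>(p, q) \<in> Ob\<close> by (auto simp: U_def)
    show "p \<in> L"
      using orbital_left_end_cases[OF x(2) \<open>{p<..<q} \<subseteq> U\<close> O0(3)] x(1) unfolding L_def RO_def by blast
    show "q \<in> R"
      using orbital_right_end_cases[OF x(2) \<open>{p<..<q} \<subseteq> U\<close> O0(3)] x(1) unfolding R_def RO_def by blast
  qed
  ultimately show ?thesis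
    unfolding Ob_def by (meson countable_SIGMA countable_subset)
qed

lemma PLo_eq_if_orbital_restrictions_eq:
  assumes "x \<in> PLo" "y \<in> PLo"
    and eq: "(\<lambda>(p, q). restrict_id p q x) ` orbitals x = (\<lambda>(p, q). restrict_id p q y) ` orbitals y"
  shows "x = y"
proof -
  have agree: "u t = v t"
    if u: "u \<in> PLo" and uv: "(\<lambda>(p, q). restrict_id p q u) ` orbitals u = (\<lambda>(p, q). restrict_id p q v) ` orbitals v"
      and moved: "u t \<noteq> t" for u v t
  proof -
    obtain p q where pq: "(p, q) \<in> orbitals u" "p < t" "t < q"
      using PLo_orbitals_cover[OF u moved] by blast
    have "restrict_id p q u \<in> (\<lambda>(p, q). restrict_id p q u) ` orbitals u"
      using pq(1) by (rule rev_image_eqI) simp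
    then obtain p' q' where "(p', q') \<in> orbitals v" and same: "restrict_id p q u = restrict_id p' q' v"
      unfolding uv by auto
    have "restrict_id p' q' v t = u t"
      using fun_cong[OF same, of t] pq by (simp add: restrict_id_def)
    then show ?thesis
      using moved by (auto simp: restrict_id_def split: if_splits)
  qed
  show ?thesis
  proof
    fix t
    show "x t = y t"
    proof (cases "x t = t")
      case True
      show ?thesis
      proof (rule ccontr)
        assume "x t \<noteq> y t"
        with True have "y t \<noteq> t"
          by simp
        with True \<open>x t \<noteq> y t\<close> show False
          using agree[OF assms(2) eq[symmetric]] by simp
      qed
    qed (rule agree[OF assms(1) eq])
  qed
qed

lemma countable_if_countable_commutators:
  assumes K: "subgroup K PLo_group" and "countable D"
    and comm: "\<And>x y. x \<in> K \<Longrightarrow> y \<in> K \<Longrightarrow> x \<circ> y \<circ> the_inv x \<circ> the_inv y \<in> D"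
  shows "countable K"
proof -
  have restr: "countable (restrict_id a b ` K)" if "x \<in> K" "(a, b) \<in> orbitals x" for x a b
    using countable_orbital_restrictions[OF assms that] .
  define W where "W = (\<Union>(a, b)\<in>(\<Union>x\<in>K. orbitals x). restrict_id a b ` K)"
  have "countable (\<Union>x\<in>K. orbitals x)"
    using countable_orbitals_of_subgroup restr by blast
  moreover have "countable ((\<lambda>(a, b). restrict_id a b ` K) ab)" if "ab \<in> (\<Union>x\<in>K. orbitals x)" for ab
    using that restr by (cases ab) auto
  ultimately have "countable W"
    unfolding W_def by (rule countable_UN)
  define R where "R x = (\<lambda>(p, q). restrict_id p q x) ` orbitals x" for x
  have "R x \<in> {A. finite A \<and> A \<subseteq> W}" if "x \<in> K" for x
  proof -
    have "x \<in> PLo"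
      using PLo_subgroupD(1)[OF K] that by blast
    then have "finite (R x)"
      unfolding R_def by (intro finite_imageI finite_PLo_orbitals)
    moreover have "R x \<subseteq> W"
      unfolding R_def W_def
    proof (rule image_subsetI)
      fix pq
      assume "pq \<in> orbitals x"
      then show "(case pq of (p, q) \<Rightarrow> restrict_id p q x) \<in> (\<Union>(a, b)\<in>(\<Union>x\<in>K. orbitals x). restrict_id a b ` K)"
        using that by (cases pq) (auto intro!: UN_I[of pq])
    qed
    ultimately show ?thesis
      by simp
  qed
  then have "R ` K \<subseteq> {A. finite A \<and> A \<subseteq> W}"
    by blast
  then have "countable (R ` K)"
    by (rule countable_subset[OF _ countable_Collect_finite_subset[OF \<open>countable W\<close>]])
  moreover have "inj_on R K"
  proof (rule inj_onI)
    fix x y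
    assume "x \<in> K" "y \<in> K" "R x = R y"
    then show "x = y"
      using PLo_eq_if_orbital_restrictions_eq[of x y] PLo_subgroupD(1)[OF K] by (auto simp: R_def)
  qed
  ultimately show ?thesis
    by (rule countable_image_inj_on)
qed

lemma (in group) countable_if_solvable_seq:
  assumes "solvable_seq G H"
    and step: "\<And>H. subgroup H G \<Longrightarrow> countable (derived G H) \<Longrightarrow> countable H"
  shows "countable H"
  using assms(1)
proof induction
  case unity
  then show ?case
    by simp
next
  case (extension K H)
  then have "derived G H \<subseteq> K"
    by (intro derived_of_subgroup_minimal)
  with extension show ?case
    by (meson countable_subset step)
qed

lemma PLo_commutator_in_derived:
  assumes "subgroup H PLo_group" "K \<subseteq> H" "x \<in> K" "y \<in> K"
  shows "x \<circ> y \<circ> the_inv x \<circ> the_inv y \<in> derived (PLo_group\<lparr>carrier := H\<rparr>) K"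
proof -
  let ?G = "PLo_group\<lparr>carrier := H\<rparr>"
  have "x \<otimes>\<^bsub>?G\<^esub> y \<otimes>\<^bsub>?G\<^esub> inv\<^bsub>?G\<^esub> x \<otimes>\<^bsub>?G\<^esub> inv\<^bsub>?G\<^esub> y \<in> derived_set ?G K"
    using assms(3,4) by blast
  then have "x \<otimes>\<^bsub>?G\<^esub> y \<otimes>\<^bsub>?G\<^esub> inv\<^bsub>?G\<^esub> x \<otimes>\<^bsub>?G\<^esub> inv\<^bsub>?G\<^esub> y \<in> derived ?G K"
    unfolding derived_def by (rule generate.incl)
  moreover have "inv\<^bsub>?G\<^esub> x = the_inv x" "inv\<^bsub>?G\<^esub> y = the_inv y"
    using PLo_subgroup_inv[OF assms(1)] assms(2-4) by auto
  ultimately show ?thesis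
    by (simp add: PLo_group_def)
qed

theorem corollary1:
  assumes "subgroup H PLo_group"
    and "solvable (PLo_group\<lparr>carrier := H\<rparr>)"
  shows "countable H"
proof -
  interpret group "PLo_group\<lparr>carrier := H\<rparr>"
    by (rule group_PLo_subgroup[OF assms(1)])
  have "solvable_seq (PLo_group\<lparr>carrier := H\<rparr>) H"
    using assms(2) by (simp add: solvable_def)
  then show ?thesis
  proof (rule countable_if_solvable_seq)
    fix K
    assume K: "subgroup K (PLo_group\<lparr>carrier := H\<rparr>)"
      and "countable (derived (PLo_group\<lparr>carrier := H\<rparr>) K)"
    have "K \<subseteq> H"
      using subgroup.subset[OF K] by simp
    then show "countable K"
      using countable_if_countable_commutators[OF subgroup_of_PLo_subgroup[OF assms(1) K]]
        PLo_commutator_in_derived[OF assms(1)] \<open>countable (derived _ K)\<close> by blast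
  qed
qed

end
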